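(* Let $\Omega\subset\mathbb{R}$ be an unbounded domain (open interval), $a\in C(\bar\Omega)\cap L^\infty(\Omega)$, and $K:\Omega\times\Omega\to[0,\infty)$ such that for every $x\in\Omega$ the map $K(x,\cdot)$ is measurable and for almost every $y\in\Omega$ the map $K(\cdot,y)$ is uniformly continuous. Assume further that $K$ is symmetric and $0\le K(x,y)\le C(1+|x-y|)^{-\alpha}$ for all $x,y\in\Omega$, for some $C>0$ and $\alpha>\frac32$. Let $\Omega_n:=\Omega\cap(-n,n)$. Then $$\lambda_p(\mathcal{L}_\Omega+a)\le\liminf_{n\to\infty}\lambda_v(\mathcal{L}_{\Omega_n}+a)\le\lambda_p'(\mathcal{L}_\Omega+a).$$
   Context: For $D\subset\Omega$, $\mathcal{L}_D[\varphi](x):=\int_D K(x,y)\varphi(y)\,dy$. $\lambda_p(\mathcal{L}_\Omega+a):=\sup\{\lambda:\exists\varphi\in C(\bar\Omega),\ \varphi>0,\ \mathcal{L}_\Omega[\varphi]+a\varphi+\lambda\varphi\le0\text{ in }\Omega\}$; $\lambda_p'(\mathcal{L}_\Omega+a):=\inf\{\lambda:\exists\varphi\in C(\Omega)\cap L^\infty(\Omega),\ \varphi\ge0,\ \varphi\not\equiv0,\ \mathcal{L}_\Omega[\varphi]+(a+\lambda)\varphi\ge0\text{ in }\Omega\}$; $\lambda_v(\mathcal{L}_D+a):=\inf_{\varphi\in L^2(D),\varphi\not\equiv0}-\frac{\langle\mathcal{L}_D[\varphi]+a\varphi,\varphi\rangle_{L^2(D)}}{\|\varphi\|_{L^2(D)}^2}$.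 *)

theory Defs
  imports "HOL-Analysis.Analysis"
begin

definition nlop :: "(real \<Rightarrow> real \<Rightarrow> real) \<Rightarrow> real set \<Rightarrow> (real \<Rightarrow> real) \<Rightarrow> real \<Rightarrow> real" where
  "nlop K D \<phi> x = (LINT y:D|lebesgue. K x y * \<phi> y)"

definition lambda_p :: "(real \<Rightarrow> real \<Rightarrow> real) \<Rightarrow> real set \<Rightarrow> (real \<Rightarrow> real) \<Rightarrow> ereal" where
  "lambda_p K \<Omega> a = Sup {ereal l | l. \<exists>\<phi>.
      continuous_on (closure \<Omega>) \<phi> \<and> (\<forall>x\<in>closure \<Omega>. \<phi> x > 0) \<and>
      (\<forall>x\<in>\<Omega>. set_integrable lebesgue \<Omega> (\<lambda>y. K x y * \<phi> y)) \<and>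
      (\<forall>x\<in>\<Omega>. nlop K \<Omega> \<phi> x + a x * \<phi> x + l * \<phi> x \<le> 0)}"

definition lambda_p' :: "(real \<Rightarrow> real \<Rightarrow> real) \<Rightarrow> real set \<Rightarrow> (real \<Rightarrow> real) \<Rightarrow> ereal" where
  "lambda_p' K \<Omega> a = Inf {ereal l | l. \<exists>\<phi>.
      continuous_on \<Omega> \<phi> \<and> bounded (\<phi> ` \<Omega>) \<and> (\<forall>x\<in>\<Omega>. \<phi> x \<ge> 0) \<and> (\<exists>x\<in>\<Omega>. \<phi> x \<noteq> 0) \<and>
      (\<forall>x\<in>\<Omega>. nlop K \<Omega> \<phi> x + (a x + l) * \<phi> x \<ge> 0)}"

definition lambda_v :: "(real \<Rightarrow> real \<Rightarrow> real) \<Rightarrow> real set \<Rightarrow> (real \<Rightarrow> real) \<Rightarrow> ereal" where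
  "lambda_v K D a = Inf {ereal (- (LINT x:D|lebesgue. (nlop K D \<phi> x + a x * \<phi> x) * \<phi> x)
                                 / (LINT x:D|lebesgue. (\<phi> x)\<^sup>2)) | \<phi>.
      set_borel_measurable lebesgue D \<phi> \<and> set_integrable lebesgue D (\<lambda>x. (\<phi> x)\<^sup>2) \<and>
      (LINT x:D|lebesgue. (\<phi> x)\<^sup>2) \<noteq> 0}"

end

theory Submission
  imports Defs "HOL-Real_Asymp.Real_Asymp"
begin

text \<open>
  Let \<open>l\<close> and a positive continuous \<open>\<phi>\<close> satisfy \<open>L\<^sub>\<Omega>[\<phi>] + (a + l) \<phi> \<le> 0\<close>, and let
  \<open>D \<subseteq> \<Omega>\<close> be a bounded interval. For a test function \<open>\<psi>\<close> on \<open>D\<close>, the symmetry of \<open>K\<close> and the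
  AM-GM inequality \<open>\<psi>(x) \<psi>(y) \<le> (\<psi>(x)\<^sup>2 \<phi>(y) / \<phi>(x) + \<psi>(y)\<^sup>2 \<phi>(x) / \<phi>(y)) / 2\<close> give
  \<open>\<langle>L\<^sub>D[\<psi>], \<psi>\<rangle> \<le> \<langle>L\<^sub>D[\<phi>], \<psi>\<^sup>2/\<phi>\<rangle> \<le> \<langle>L\<^sub>\<Omega>[\<phi>], \<psi>\<^sup>2/\<phi>\<rangle> \<le> -\<langle>(a + l) \<psi>, \<psi>\<rangle>\<close>,
  hence \<open>l \<le> \<lambda>\<^sub>v(L\<^sub>D + a)\<close> for every such \<open>D\<close>, in particular for every \<open>\<Omega>\<^sub>n\<close>.

  Let a bounded \<open>\<phi> \<ge> 0\<close>, \<open>\<phi> \<noteq> 0\<close>, satisfy \<open>L\<^sub>\<Omega>[\<phi>] + (a + l) \<phi> \<ge> 0\<close> and use \<open>\<phi>\<close> itself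
  as test function on \<open>\<Omega>\<^sub>n\<close>. Its Rayleigh quotient is at most \<open>l + E\<^sub>n / S\<^sub>n\<close>, where
  \<open>S\<^sub>n = \<integral>\<^bsub>\<Omega>\<^sub>n\<^esub> \<phi>\<^sup>2\<close> and \<open>E\<^sub>n = \<integral>\<^bsub>\<Omega>\<^sub>n\<^esub> h\<^sub>n \<phi>\<close>, with \<open>h\<^sub>n(x) = k ((1 + n - x)\<^bsup>1-\<alpha>\<^esup> + (1 + n + x)\<^bsup>1-\<alpha>\<^esup>)\<close>
  bounding the truncation error \<open>L\<^sub>\<Omega>[\<phi>] - L\<^bsub>\<Omega>\<^sub>n\<^esub>[\<phi>]\<close>. On \<open>(-r, r)\<close> the weight \<open>h\<^sub>n\<close> is small once
  \<open>n \<gg> r\<close>; outside, AM-GM bounds \<open>h\<^sub>n \<phi>\<close> by \<open>t \<phi>\<^sup>2 / 2 + h\<^sub>n\<^sup>2 / (2 t)\<close>, and \<open>\<integral> h\<^sub>n\<^sup>2\<close> is bounded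
  uniformly in \<open>n\<close> because \<open>\<alpha> > 3/2\<close>. Choosing \<open>r\<close> and \<open>t\<close> according to whether \<open>S\<^sub>n\<close> stays bounded
  yields \<open>E\<^sub>n = o(S\<^sub>n)\<close>.
\<close>

lemma sigma_finite_lebesgue: "sigma_finite_measure (lebesgue :: real measure)"
proof -
  obtain A :: "real set set" where A: "countable A" "A \<subseteq> sets lborel" "\<Union>A = space lborel"
      "\<forall>a\<in>A. emeasure lborel a \<noteq> \<infinity>"
    using sigma_finite_measure.sigma_finite_countable[OF sigma_finite_lborel] by blast
  show ?thesis
    by (rule sigma_finite_measure.intro, rule exI[of _ A]) (use A in \<open>auto simp: subset_eq\<close>)
qed

interpretation lebesgue_sf: sigma_finite_measure "lebesgue :: real measure"
  by (rule sigma_finite_lebesgue)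
interpretation lebesgue_pair: pair_sigma_finite "lebesgue :: real measure" "lebesgue :: real measure" ..

lemma borel_measurable_lebesgue_ident[measurable]: "(\<lambda>x::real. x) \<in> borel_measurable lebesgue"
  by (rule measurable_completion) simp

lemma borel_measurable_lebesgue_indicator_continuous:
  fixes f :: "real \<Rightarrow> real"
  assumes "A \<in> sets borel" "continuous_on A f"
  shows "(\<lambda>x. indicator A x * f x) \<in> borel_measurable lebesgue"
proof -
  have "(\<lambda>x. indicator A x *\<^sub>R f x) \<in> borel_measurable borel"
    by (rule borel_measurable_continuous_on_indicator[OF assms])
  then show ?thesis by (simp add: measurable_completion measurable_lborel1)
qed

lemma integrable_bounded_by_indicator:
  fixes f :: "real \<Rightarrow> real"
  assumes "f \<in> borel_measurable lebesgue" "integrable lebesgue (indicator A :: real \<Rightarrow> real)"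
    and "\<And>x. \<bar>f x\<bar> \<le> B * indicator A x"
  shows "integrable lebesgue f"
  by (rule Bochner_Integration.integrable_bound[OF integrable_mult_right[OF assms(2), of B]])
     (use assms in \<open>auto intro!: AE_I2 intro: order_trans[OF _ abs_ge_self]\<close>)

lemma mult_le_weighted_squares:
  fixes a b t :: real
  assumes "t > 0"
  shows "a * b \<le> (t * a\<^sup>2 + b\<^sup>2 / t) / 2"
proof -
  have "0 \<le> (t * a - b)\<^sup>2" by simp
  then have "2 * (a * b) * t \<le> (t * a\<^sup>2 + b\<^sup>2 / t) * t"
    using assms by (simp add: power2_eq_square algebra_simps)
  then show ?thesis using assms by (simp add: mult_le_cancel_right)
qed

lemma abs_le_one_plus_square: "\<bar>t\<bar> \<le> 1 + t\<^sup>2" for t :: real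
proof (cases "\<bar>t\<bar> \<le> 1")
  case False
  then have "\<bar>t\<bar> * 1 \<le> \<bar>t\<bar> * \<bar>t\<bar>" by (intro mult_left_mono) auto
  then show ?thesis by (simp add: power2_eq_square abs_mult_self_eq)
qed (smt (verit) zero_le_power2)

lemma powr_nonpos_le_one: "1 \<le> (y::real) \<Longrightarrow> a \<le> 0 \<Longrightarrow> y powr a \<le> 1"
  using powr_mono2'[of a 1 y] by simp

lemma integrable_bounded_kernel_product:
  fixes k :: "real \<Rightarrow> real \<Rightarrow> real" and f g :: "real \<Rightarrow> real"
  assumes k[measurable]: "(\<lambda>p. k (fst p) (snd p)) \<in> borel_measurable (lebesgue \<Otimes>\<^sub>M lebesgue)"
    and k_bound: "\<And>x y. \<bar>k x y\<bar> \<le> B"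
    and f: "integrable lebesgue f" and g: "integrable lebesgue g"
  shows "integrable (lebesgue \<Otimes>\<^sub>M lebesgue) (\<lambda>p. k (fst p) (snd p) * f (fst p) * g (snd p))"
    (is "integrable _ ?F")
proof (rule lebesgue_pair.Fubini_integrable)
  have [measurable]: "f \<in> borel_measurable lebesgue" "g \<in> borel_measurable lebesgue"
    using f g by auto
  show "?F \<in> borel_measurable (lebesgue \<Otimes>\<^sub>M lebesgue)" by measurable
  have bound: "norm (?F (x, y)) \<le> B * \<bar>f x\<bar> * \<bar>g y\<bar>" for x y
    using k_bound[of x y] by (auto simp: abs_mult intro!: mult_right_mono)
  have "integrable lebesgue (\<lambda>y. ?F (x, y))" for x
  proof (rule Bochner_Integration.integrable_bound)
    show "integrable lebesgue (\<lambda>y. B * \<bar>f x\<bar> * \<bar>g y\<bar>)" using g by auto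
    show "(\<lambda>y. ?F (x, y)) \<in> borel_measurable lebesgue"
      using measurable_Pair2[OF k, of x] by simp
    show "AE y in lebesgue. norm (?F (x, y)) \<le> norm (B * \<bar>f x\<bar> * \<bar>g y\<bar>)"
      using bound by (auto intro: order_trans[OF _ abs_ge_self])
  qed
  then show "AE x in lebesgue. integrable lebesgue (\<lambda>y. ?F (x, y))" by simp
  show "integrable lebesgue (\<lambda>x. LINT y|lebesgue. norm (?F (x, y)))"
  proof (rule Bochner_Integration.integrable_bound)
    show "integrable lebesgue (\<lambda>x. B * \<bar>f x\<bar> * (LINT y|lebesgue. \<bar>g y\<bar>))"
      using f by auto
    show "AE x in lebesgue. norm (LINT y|lebesgue. norm (?F (x, y)))
        \<le> norm (B * \<bar>f x\<bar> * (LINT y|lebesgue. \<bar>g y\<bar>))"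
    proof (rule AE_I2)
      fix x
      have "(LINT y|lebesgue. norm (?F (x, y))) \<le> (LINT y|lebesgue. B * \<bar>f x\<bar> * \<bar>g y\<bar>)"
        by (rule integral_mono) (use \<open>integrable lebesgue (\<lambda>y. ?F (x, y))\<close> g bound in auto)
      then show "norm (LINT y|lebesgue. norm (?F (x, y))) \<le> norm (B * \<bar>f x\<bar> * (LINT y|lebesgue. \<bar>g y\<bar>))"
        by (simp add: integral_nonneg_AE)
    qed
  qed (simp add: case_prod_beta')
qed

lemma symmetric_kernel_form_le:
  fixes k :: "real \<Rightarrow> real \<Rightarrow> real" and f g u :: "real \<Rightarrow> real"
  assumes k[measurable]: "(\<lambda>p. k (fst p) (snd p)) \<in> borel_measurable (lebesgue \<Otimes>\<^sub>M lebesgue)"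
    and k_sym: "\<And>x y. k x y = k y x" and k_nonneg: "\<And>x y. 0 \<le> k x y" and k_le: "\<And>x y. k x y \<le> B"
    and f: "integrable lebesgue f" and g: "integrable lebesgue g" and u: "integrable lebesgue u"
    and amgm: "\<And>x y. f x * f y \<le> (u x * g y + g x * u y) / 2"
  shows "(\<integral>p. k (fst p) (snd p) * f (fst p) * f (snd p) \<partial>(lebesgue \<Otimes>\<^sub>M lebesgue))
       \<le> (\<integral>p. k (fst p) (snd p) * u (fst p) * g (snd p) \<partial>(lebesgue \<Otimes>\<^sub>M lebesgue))"
proof -
  let ?F = "\<lambda>f g p. k (fst p) (snd p) * f (fst p) * g (snd p)"
  have k_abs: "\<bar>k x y\<bar> \<le> B" for x y using k_nonneg[of x y] k_le[of x y] by simp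
  note integrable = integrable_bounded_kernel_product[OF k k_abs]
  have [measurable]: "u \<in> borel_measurable lebesgue" "g \<in> borel_measurable lebesgue" using u g by auto
  have swap: "integral\<^sup>L (lebesgue \<Otimes>\<^sub>M lebesgue) (?F g u) = integral\<^sup>L (lebesgue \<Otimes>\<^sub>M lebesgue) (?F u g)"
  proof -
    have "(\<lambda>(x, y). ?F u g (y, x)) = ?F g u" by (auto simp: k_sym fun_eq_iff)
    then show ?thesis using lebesgue_pair.integral_product_swap[of "?F u g"] by simp
  qed
  have "integral\<^sup>L (lebesgue \<Otimes>\<^sub>M lebesgue) (?F f f)
      \<le> integral\<^sup>L (lebesgue \<Otimes>\<^sub>M lebesgue) (\<lambda>p. (?F u g p + ?F g u p) / 2)"
  proof (rule integral_mono)
    show "?F f f p \<le> (?F u g p + ?F g u p) / 2" for p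
      using mult_left_mono[OF amgm[of "fst p" "snd p"] k_nonneg[of "fst p" "snd p"]]
      by (simp add: algebra_simps add_divide_distrib)
  qed (use integrable[OF f f] integrable[OF u g] integrable[OF g u] in auto)
  also have "\<dots> = integral\<^sup>L (lebesgue \<Otimes>\<^sub>M lebesgue) (?F u g)"
    using integrable[OF u g] integrable[OF g u] swap by simp
  finally show ?thesis .
qed

lemma floor_grid_approximation:
  fixes c d x :: real and k :: nat
  assumes "c < d" "c < x" "x < d"
  defines "q \<equiv> c + (d - c) * ((real_of_int \<lfloor>real k * ((x - c) / (d - c))\<rfloor> + 1) / (real k + 2))"
  shows "c < q" "q < d" "\<bar>q - x\<bar> \<le> 2 * (d - c) / (real k + 2)"
proof -
  define t where "t = (x - c) / (d - c)"
  have t: "0 < t" "t < 1" using assms by (auto simp: t_def field_simps)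
  define s where "s = (real_of_int \<lfloor>real k * t\<rfloor> + 1) / (real k + 2)"
  have fl: "real k * t - 1 < real_of_int \<lfloor>real k * t\<rfloor>" "real_of_int \<lfloor>real k * t\<rfloor> \<le> real k * t"
    by linarith+
  have "real k * t \<le> real k" using t by (simp add: mult_left_le)
  moreover have "0 \<le> real_of_int \<lfloor>real k * t\<rfloor>" using t by simp
  ultimately have "0 < real_of_int \<lfloor>real k * t\<rfloor> + 1" "real_of_int \<lfloor>real k * t\<rfloor> + 1 < real k + 2"
    using fl by linarith+
  then have s: "0 < s" "s < 1" by (simp_all add: s_def)
  have "s * (real k + 2) = real_of_int \<lfloor>real k * t\<rfloor> + 1" by (simp add: s_def)
  then have "\<bar>s * (real k + 2) - t * (real k + 2)\<bar> \<le> 2"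
    using fl t by (simp add: algebra_simps) linarith
  then have "\<bar>s - t\<bar> * (real k + 2) \<le> 2" by (simp add: left_diff_distrib[symmetric] abs_mult)
  then have st: "\<bar>s - t\<bar> \<le> 2 / (real k + 2)" by (simp add: field_simps)
  have q: "q = c + (d - c) * s" and x: "x = c + (d - c) * t"
    using assms by (simp_all add: q_def s_def t_def)
  have "0 < (d - c) * s" "(d - c) * s < d - c" using s \<open>c < d\<close> by simp_all
  then show "c < q" "q < d" unfolding q by linarith+
  have "\<bar>q - x\<bar> = (d - c) * \<bar>s - t\<bar>" using \<open>c < d\<close> unfolding q x
    by (simp add: abs_mult flip: right_diff_distrib)
  also have "\<dots> \<le> (d - c) * (2 / (real k + 2))" using st assms by (intro mult_left_mono) auto
  finally show "\<bar>q - x\<bar> \<le> 2 * (d - c) / (real k + 2)" by (simp add: mult.commute)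
qed

text \<open>
  A kernel that is measurable in \<open>y\<close> and continuous in \<open>x\<close> (for \<open>y\<close> off a null set) is jointly
  measurable: it is the pointwise limit of \<open>K(q\<^sub>k(x), y)\<close>, where \<open>q\<^sub>k(x)\<close> runs through a countable grid.
\<close>
lemma truncated_kernel_measurable:
  fixes K :: "real \<Rightarrow> real \<Rightarrow> real" and c d :: real and N \<Omega> :: "real set"
  assumes cd: "c < d" "{c<..<d} \<subseteq> \<Omega>" and "open \<Omega>" and N: "N \<in> sets lebesgue"
    and cont: "\<And>y. y \<in> \<Omega> \<Longrightarrow> y \<notin> N \<Longrightarrow> continuous_on \<Omega> (\<lambda>x. K x y)"
    and meas: "\<And>x. x \<in> \<Omega> \<Longrightarrow> set_borel_measurable lebesgue \<Omega> (K x)"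
  shows "(\<lambda>p. indicator {c<..<d} (fst p) * indicator {c<..<d} (snd p) * indicator (-N) (fst p)
            * indicator (-N) (snd p) * K (fst p) (snd p)) \<in> borel_measurable (lebesgue \<Otimes>\<^sub>M lebesgue)"
    (is "?Kt \<in> _")
proof -
  define D where "D = {c<..<d}"
  define v where "v k j = c + (d - c) * ((real_of_int j + 1) / (real k + 2))" for k :: nat and j :: int
  define G where "G k j y = (if v k j \<in> \<Omega> then indicator \<Omega> y * K (v k j) y else 0)" for k j y
  define fl where "fl k x = \<lfloor>real k * ((x - c) / (d - c))\<rfloor>" for k :: nat and x :: real
  define u where "u k p = indicator D (fst p) * indicator D (snd p) * indicator (-N) (fst p)
            * indicator (-N) (snd p) * G k (fl k (fst p)) (snd p)" for k p
  have [measurable]: "D \<in> sets lebesgue" "- N \<in> sets lebesgue"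
    using N by (auto simp: D_def Compl_in_sets_lebesgue)
  have G_measurable: "G k j \<in> borel_measurable lebesgue" for k j
    using meas by (cases "v k j \<in> \<Omega>") (auto simp: G_def[abs_def] set_borel_measurable_def)
  have fl_measurable: "(\<lambda>p. fl k (fst p)) \<in> measurable (lebesgue \<Otimes>\<^sub>M lebesgue) (count_space UNIV)" for k
    unfolding fl_def by (rule measurable_compose[OF _ measurable_real_floor]) measurable
  have "(\<lambda>p. G k (fl k (fst p)) (snd p)) \<in> borel_measurable (lebesgue \<Otimes>\<^sub>M lebesgue)" for k
    by (rule measurable_compose_countable'[where I=UNIV, OF _ fl_measurable])
       (auto intro: measurable_compose[OF measurable_snd G_measurable])
  then have u_measurable: "u k \<in> borel_measurable (lebesgue \<Otimes>\<^sub>M lebesgue)" for k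
    unfolding u_def by measurable
  show ?thesis
  proof (rule borel_measurable_LIMSEQ_real[OF _ u_measurable])
    fix p :: "real \<times> real"
    obtain x y where p: "p = (x, y)" by (cases p)
    show "(\<lambda>k. u k p) \<longlonglongrightarrow> ?Kt p"
    proof (cases "x \<in> D \<and> y \<in> D \<and> x \<notin> N \<and> y \<notin> N")
      case True
      define q where "q k = c + (d - c) * ((real_of_int (fl k x) + 1) / (real k + 2))" for k
      have q: "c < q k" "q k < d" "\<bar>q k - x\<bar> \<le> 2 * (d - c) / (real k + 2)" for k
        using floor_grid_approximation[of c d x k] True cd by (auto simp: q_def fl_def D_def)
      have "u k p = K (q k) y" for k
      proof -
        have "q k \<in> \<Omega>" "y \<in> \<Omega>" using q[of k] cd True by (auto simp: D_def)
        then show ?thesis using True by (simp add: u_def p G_def D_def v_def q_def)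
      qed
      moreover have "(\<lambda>k. K (q k) y) \<longlonglongrightarrow> K x y"
      proof (rule isCont_tendsto_compose[where g = "\<lambda>x. K x y"])
        have "x \<in> \<Omega>" "y \<in> \<Omega>" using True cd by (auto simp: D_def)
        then show "isCont (\<lambda>x. K x y) x"
          using cont True \<open>open \<Omega>\<close> by (simp add: continuous_on_eq_continuous_at)
        have "(\<lambda>k. 2 * (d - c) / (real k + 2)) \<longlonglongrightarrow> 0" by real_asymp
        then have "(\<lambda>k. q k - x) \<longlonglongrightarrow> 0"
          by (rule Lim_null_comparison[rotated]) (use q in auto)
        then show "q \<longlonglongrightarrow> x" by (simp add: LIM_zero_iff)
      qed
      ultimately show ?thesis using True by (simp add: p D_def)
    qed (auto simp: u_def p D_def)
  qed
qed

locale interval_kernel =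
  fixes K :: "real \<Rightarrow> real \<Rightarrow> real" and \<Omega> :: "real set" and c d B :: real and N :: "real set"
  assumes cd: "c < d" and interval_subset: "{c<..<d} \<subseteq> \<Omega>" and open_domain: "open \<Omega>"
    and null_N: "N \<in> null_sets lebesgue"
    and continuous: "\<And>y. y \<in> \<Omega> \<Longrightarrow> y \<notin> N \<Longrightarrow> continuous_on \<Omega> (\<lambda>x. K x y)"
    and measurable: "\<And>x. x \<in> \<Omega> \<Longrightarrow> set_borel_measurable lebesgue \<Omega> (K x)"
    and symmetric: "\<And>x y. x \<in> \<Omega> \<Longrightarrow> y \<in> \<Omega> \<Longrightarrow> K x y = K y x"
    and bounded: "\<And>x y. x \<in> \<Omega> \<Longrightarrow> y \<in> \<Omega> \<Longrightarrow> 0 \<le> K x y \<and> K x y \<le> B"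
begin

definition D :: "real set" where "D = {c<..<d}"

text \<open>\<open>Kt\<close> agrees with \<open>K\<close> on \<open>D \<times> D\<close> up to a null set and, unlike \<open>K\<close>, is jointly measurable.\<close>
definition Kt :: "real \<Rightarrow> real \<Rightarrow> real" where
  "Kt x y = indicator D x * indicator D y * indicator (-N) x * indicator (-N) y * K x y"

lemma D_sets[measurable]: "D \<in> sets lebesgue" and D_borel[measurable]: "D \<in> sets borel"
  by (simp_all add: D_def)

lemma compl_N_sets[measurable]: "- N \<in> sets lebesgue"
  using null_N by (auto simp: Compl_in_sets_lebesgue)

lemma D_subset: "D \<subseteq> \<Omega>" and D_subset_Icc: "D \<subseteq> {c..d}"
  using interval_subset by (auto simp: D_def)

lemma integrable_indicator_D: "integrable lebesgue (indicator D :: real \<Rightarrow> real)"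
  using cd by (intro integrable_real_indicator) (auto simp: D_def emeasure_completion)

lemma integrable_bounded_on_D:
  fixes f :: "real \<Rightarrow> real"
  assumes "f \<in> borel_measurable lebesgue" and "\<And>x. \<bar>f x\<bar> \<le> M * indicator D x"
  shows "integrable lebesgue f"
  using integrable_bounded_by_indicator[OF assms(1) integrable_indicator_D] assms(2) by blast

lemma Kt_measurable[measurable]: "(\<lambda>p. Kt (fst p) (snd p)) \<in> borel_measurable (lebesgue \<Otimes>\<^sub>M lebesgue)"
  unfolding Kt_def D_def
  using truncated_kernel_measurable[OF cd interval_subset open_domain _ continuous measurable] null_N
  by auto

lemma Kt_measurable'[measurable]: "Kt x \<in> borel_measurable lebesgue"
  using measurable_Pair2[OF Kt_measurable, of x] by simp

lemma B_nonneg: "0 \<le> B"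
proof -
  have "(c + d) / 2 \<in> \<Omega>" using interval_subset cd by auto
  then show ?thesis using bounded[of "(c + d) / 2" "(c + d) / 2"] by auto
qed

lemma Kt_nonneg: "0 \<le> Kt x y" and Kt_le: "Kt x y \<le> B"
  using bounded[of x y] D_subset B_nonneg by (auto simp: Kt_def indicator_def)

lemma Kt_symmetric: "Kt x y = Kt y x"
  using symmetric[of x y] D_subset by (auto simp: Kt_def indicator_def)

lemma nlop_eq_integral_Kt:
  assumes f: "set_borel_measurable lebesgue D f" and x: "x \<in> D" "x \<notin> N"
  shows "nlop K D f x = (\<integral>y. Kt x y * (indicator D y * f y) \<partial>lebesgue)"
proof -
  have "x \<in> \<Omega>" using x D_subset by auto
  then have [measurable]: "(\<lambda>y. indicator \<Omega> y * K x y) \<in> borel_measurable lebesgue"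
    using measurable by (simp add: set_borel_measurable_def)
  have [measurable]: "(\<lambda>y. indicator D y * f y) \<in> borel_measurable lebesgue"
    using f by (simp add: set_borel_measurable_def)
  have "nlop K D f x = (\<integral>y. (indicator \<Omega> y * K x y) * (indicator D y * f y) \<partial>lebesgue)"
    unfolding nlop_def set_lebesgue_integral_def
    by (intro Bochner_Integration.integral_cong refl) (use D_subset in \<open>auto simp: indicator_def\<close>)
  also have "\<dots> = (\<integral>y. Kt x y * (indicator D y * f y) \<partial>lebesgue)"
  proof (rule integral_cong_AE)
    show "AE y in lebesgue. indicator \<Omega> y * K x y * (indicator D y * f y) = Kt x y * (indicator D y * f y)"
      using AE_not_in[OF null_N] by eventually_elim (use x D_subset in \<open>auto simp: Kt_def indicator_def\<close>)
  qed simp_all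
  finally show ?thesis .
qed

lemma nlop_measurable:
  assumes f: "set_borel_measurable lebesgue D f"
  shows "(\<lambda>x. indicator D x * nlop K D f x) \<in> borel_measurable lebesgue"
proof (rule borel_measurable_AE)
  have [measurable]: "(\<lambda>y. indicator D y * f y) \<in> borel_measurable lebesgue"
    using f by (simp add: set_borel_measurable_def)
  have "case_prod (\<lambda>x y. Kt x y * (indicator D y * f y)) \<in> borel_measurable (lebesgue \<Otimes>\<^sub>M lebesgue)"
    by (simp add: case_prod_beta')
  then show "(\<lambda>x. indicator D x * (\<integral>y. Kt x y * (indicator D y * f y) \<partial>lebesgue)) \<in> borel_measurable lebesgue"
    using lebesgue_sf.borel_measurable_lebesgue_integral by measurable
  show "AE x in lebesgue. indicator D x * (\<integral>y. Kt x y * (indicator D y * f y) \<partial>lebesgue)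
      = indicator D x * nlop K D f x"
    using AE_not_in[OF null_N] by eventually_elim (use nlop_eq_integral_Kt[OF f] in \<open>auto simp: indicator_def\<close>)
qed

lemma abs_nlop_le:
  assumes f: "set_integrable lebesgue D f" and x: "x \<in> D"
  shows "\<bar>nlop K D f x\<bar> \<le> B * (\<integral>y. \<bar>indicator D y * f y\<bar> \<partial>lebesgue)"
proof -
  have "x \<in> \<Omega>" using x D_subset by auto
  then have [measurable]: "(\<lambda>y. indicator \<Omega> y * K x y) \<in> borel_measurable lebesgue"
    using measurable by (simp add: set_borel_measurable_def)
  have fi: "integrable lebesgue (\<lambda>y. indicator D y * f y)"
    using f by (simp add: set_integrable_def)
  have bound: "\<bar>indicator \<Omega> y * K x y * (indicator D y * f y)\<bar> \<le> B * \<bar>indicator D y * f y\<bar>" for y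
    using bounded[OF \<open>x \<in> \<Omega>\<close>] B_nonneg by (auto simp: abs_mult indicator_def intro!: mult_right_mono)
  have "nlop K D f x = (\<integral>y. (indicator \<Omega> y * K x y) * (indicator D y * f y) \<partial>lebesgue)"
    unfolding nlop_def set_lebesgue_integral_def
    by (intro Bochner_Integration.integral_cong refl) (use D_subset in \<open>auto simp: indicator_def\<close>)
  also have "\<bar>\<dots>\<bar> \<le> (\<integral>y. \<bar>(indicator \<Omega> y * K x y) * (indicator D y * f y)\<bar> \<partial>lebesgue)"
    by (rule integral_abs_bound)
  also have "\<dots> \<le> (\<integral>y. B * \<bar>indicator D y * f y\<bar> \<partial>lebesgue)"
  proof (rule integral_mono)
    show "integrable lebesgue (\<lambda>y. \<bar>indicator \<Omega> y * K x y * (indicator D y * f y)\<bar>)"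
    proof (rule Bochner_Integration.integrable_bound[OF integrable_mult_right[OF integrable_abs[OF fi], of B]])
      show "(\<lambda>y. \<bar>indicator \<Omega> y * K x y * (indicator D y * f y)\<bar>) \<in> borel_measurable lebesgue"
        using fi by measurable
    qed (use bound B_nonneg in \<open>auto intro!: AE_I2\<close>)
  qed (use fi bound in auto)
  finally show ?thesis by simp
qed

lemma nlop_D_le_nlop:
  assumes x: "x \<in> D" and nonneg: "\<And>y. y \<in> \<Omega> \<Longrightarrow> 0 \<le> \<phi> y"
    and integrable: "set_integrable lebesgue \<Omega> (\<lambda>y. K x y * \<phi> y)"
  shows "nlop K D \<phi> x \<le> nlop K \<Omega> \<phi> x"
proof -
  have "x \<in> \<Omega>" using x D_subset by auto
  have pointwise: "indicator D y * (K x y * \<phi> y) \<le> indicator \<Omega> y * (K x y * \<phi> y)" for y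
    using bounded[OF \<open>x \<in> \<Omega>\<close>, of y] nonneg[of y] D_subset by (auto simp: indicator_def)
  have "set_integrable lebesgue D (\<lambda>y. K x y * \<phi> y)"
    by (rule set_integrable_subset[OF integrable _ D_subset]) simp
  then show ?thesis
    using integrable pointwise
    unfolding nlop_def set_lebesgue_integral_def set_integrable_def
    by (auto intro: integral_mono)
qed

lemma integral_mult_nlop:
  fixes f g :: "real \<Rightarrow> real"
  assumes f: "integrable lebesgue (\<lambda>y. indicator D y * f y)"
    and g: "integrable lebesgue (\<lambda>x. indicator D x * g x)"
  defines "F \<equiv> \<lambda>p. Kt (fst p) (snd p) * (indicator D (fst p) * g (fst p)) * (indicator D (snd p) * f (snd p))"
  shows "integrable lebesgue (\<lambda>x. indicator D x * (g x * nlop K D f x))"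
    and "(\<integral>x. indicator D x * (g x * nlop K D f x) \<partial>lebesgue) = integral\<^sup>L (lebesgue \<Otimes>\<^sub>M lebesgue) F"
proof -
  have F: "integrable (lebesgue \<Otimes>\<^sub>M lebesgue) F"
    unfolding F_def
    by (rule integrable_bounded_kernel_product[OF Kt_measurable _ g f, of B])
       (use Kt_nonneg Kt_le in \<open>auto simp: abs_of_nonneg\<close>)
  have f_measurable: "set_borel_measurable lebesgue D f"
    using borel_measurable_integrable[OF f] by (simp add: set_borel_measurable_def)
  have [measurable]: "(\<lambda>x. indicator D x * g x) \<in> borel_measurable lebesgue"
    using g by auto
  have [measurable]: "(\<lambda>x. indicator D x * nlop K D f x) \<in> borel_measurable lebesgue"
    by (rule nlop_measurable[OF f_measurable])
  have measurable: "(\<lambda>x. indicator D x * (g x * nlop K D f x)) \<in> borel_measurable lebesgue"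
  proof -
    have "(\<lambda>x. indicator D x * (g x * nlop K D f x))
        = (\<lambda>x. (indicator D x * g x) * (indicator D x * nlop K D f x))"
      by (auto simp: fun_eq_iff indicator_def)
    then show ?thesis by simp
  qed
  have inner: "AE x in lebesgue. (\<integral>y. F (x, y) \<partial>lebesgue) = indicator D x * (g x * nlop K D f x)"
    using AE_not_in[OF null_N]
  proof eventually_elim
    case (elim x)
    show ?case
    proof (cases "x \<in> D")
      case True
      have "(\<lambda>y. F (x, y)) = (\<lambda>y. g x * (Kt x y * (indicator D y * f y)))"
        using True by (simp add: F_def fun_eq_iff)
      then have "(\<integral>y. F (x, y) \<partial>lebesgue) = g x * (\<integral>y. Kt x y * (indicator D y * f y) \<partial>lebesgue)"
        by simp
      then show ?thesis using nlop_eq_integral_Kt[OF f_measurable True elim] True by simp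
    qed (simp add: F_def)
  qed
  show "integrable lebesgue (\<lambda>x. indicator D x * (g x * nlop K D f x))"
    using integrable_cong_AE_imp[OF lebesgue_pair.integrable_fst'[OF F] measurable] inner
    by (simp add: eq_commute)
  have "(\<integral>x. indicator D x * (g x * nlop K D f x) \<partial>lebesgue) = (\<integral>x. (\<integral>y. F (x, y) \<partial>lebesgue) \<partial>lebesgue)"
    by (rule integral_cong_AE[OF measurable]) (use lebesgue_pair.integrable_fst'[OF F] inner in auto)
  also have "\<dots> = integral\<^sup>L (lebesgue \<Otimes>\<^sub>M lebesgue) F"
    by (rule lebesgue_pair.integral_fst'[OF F])
  finally show "(\<integral>x. indicator D x * (g x * nlop K D f x) \<partial>lebesgue) = integral\<^sup>L (lebesgue \<Otimes>\<^sub>M lebesgue) F" .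
qed

end

context interval_kernel
begin

lemma integral_nlop_le_weighted:
  fixes \<phi> \<psi> :: "real \<Rightarrow> real"
  assumes \<phi>_pos: "\<And>x. x \<in> D \<Longrightarrow> 0 < \<phi> x"
    and \<phi>: "integrable lebesgue (\<lambda>x. indicator D x * \<phi> x)"
    and \<psi>: "integrable lebesgue (\<lambda>x. indicator D x * \<psi> x)"
    and \<psi>2: "integrable lebesgue (\<lambda>x. indicator D x * ((\<psi> x)\<^sup>2 / \<phi> x))"
  shows "(\<integral>x. indicator D x * (\<psi> x * nlop K D \<psi> x) \<partial>lebesgue)
       \<le> (\<integral>x. indicator D x * ((\<psi> x)\<^sup>2 / \<phi> x * nlop K D \<phi> x) \<partial>lebesgue)"
proof -
  have amgm: "(indicator D x * \<psi> x) * (indicator D y * \<psi> y)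
      \<le> ((indicator D x * ((\<psi> x)\<^sup>2 / \<phi> x)) * (indicator D y * \<phi> y)
         + (indicator D x * \<phi> x) * (indicator D y * ((\<psi> y)\<^sup>2 / \<phi> y))) / 2" for x y
  proof (cases "x \<in> D \<and> y \<in> D")
    case True
    then have "0 < \<phi> x" "0 < \<phi> y" using \<phi>_pos by auto
    then show ?thesis
      using True mult_le_weighted_squares[of "\<phi> y / \<phi> x" "\<psi> x" "\<psi> y"]
      by (simp add: field_simps power2_eq_square)
  qed auto
  show ?thesis
    unfolding integral_mult_nlop(2)[OF \<psi> \<psi>] integral_mult_nlop(2)[OF \<phi> \<psi>2]
    by (rule symmetric_kernel_form_le[OF Kt_measurable Kt_symmetric Kt_nonneg Kt_le \<psi> \<phi> \<psi>2 amgm])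
qed

lemma rayleigh_quotient_ge:
  fixes \<phi> a \<psi> :: "real \<Rightarrow> real" and l A :: real
  assumes \<phi>_pos: "\<And>x. x \<in> {c..d} \<Longrightarrow> \<phi> x > 0" and \<phi>_cont: "continuous_on {c..d} \<phi>"
    and \<phi>_nonneg: "\<And>y. y \<in> \<Omega> \<Longrightarrow> 0 \<le> \<phi> y"
    and \<phi>_integrable: "\<And>x. x \<in> D \<Longrightarrow> set_integrable lebesgue \<Omega> (\<lambda>y. K x y * \<phi> y)"
    and supersolution: "\<And>x. x \<in> D \<Longrightarrow> nlop K \<Omega> \<phi> x + a x * \<phi> x + l * \<phi> x \<le> 0"
    and a_cont: "continuous_on D a" and a_bound: "\<And>x. x \<in> D \<Longrightarrow> \<bar>a x\<bar> \<le> A"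
    and \<psi>_meas: "set_borel_measurable lebesgue D \<psi>" and \<psi>2: "set_integrable lebesgue D (\<lambda>x. (\<psi> x)\<^sup>2)"
    and \<psi>_nonzero: "(LINT x:D|lebesgue. (\<psi> x)\<^sup>2) \<noteq> 0"
  shows "l \<le> -(LINT x:D|lebesgue. (nlop K D \<psi> x + a x * \<psi> x) * \<psi> x) / (LINT x:D|lebesgue. (\<psi> x)\<^sup>2)"
proof -
  obtain m where m: "m > 0" "\<And>x. x \<in> D \<Longrightarrow> m \<le> \<phi> x"
  proof -
    obtain x0 where "x0 \<in> {c..d}" "\<forall>y\<in>{c..d}. \<phi> x0 \<le> \<phi> y"
      using continuous_attains_inf[OF compact_Icc _ \<phi>_cont] cd by auto
    then show ?thesis using that[of "\<phi> x0"] \<phi>_pos D_subset_Icc by auto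
  qed
  obtain M where M: "\<And>x. x \<in> D \<Longrightarrow> \<bar>\<phi> x\<bar> \<le> M"
    using compact_imp_bounded[OF compact_continuous_image[OF \<phi>_cont compact_Icc]] D_subset_Icc
    by (force simp: bounded_iff)
  have \<phi>_D_pos: "\<And>x. x \<in> D \<Longrightarrow> 0 < \<phi> x" using \<phi>_pos D_subset_Icc by auto
  define S where "S = (LINT x:D|lebesgue. (\<psi> x)\<^sup>2)"
  have [measurable]: "(\<lambda>x. indicator D x * \<psi> x) \<in> borel_measurable lebesgue"
    using \<psi>_meas by (simp add: set_borel_measurable_def)
  have [measurable]: "(\<lambda>x. indicator D x * a x) \<in> borel_measurable lebesgue"
    by (rule borel_measurable_lebesgue_indicator_continuous[OF D_borel a_cont])
  have \<phi>_meas: "(\<lambda>x. indicator D x * \<phi> x) \<in> borel_measurable lebesgue"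
    by (rule borel_measurable_lebesgue_indicator_continuous[OF D_borel continuous_on_subset[OF \<phi>_cont D_subset_Icc]])
  have [measurable]: "(\<lambda>x. indicator D x * (1 / \<phi> x)) \<in> borel_measurable lebesgue"
    using continuous_on_subset[OF \<phi>_cont D_subset_Icc] \<phi>_D_pos
    by (intro borel_measurable_lebesgue_indicator_continuous[OF D_borel] continuous_intros)
       (auto simp: less_le)
  have \<psi>2_int: "integrable lebesgue (\<lambda>x. indicator D x * (\<psi> x)\<^sup>2)"
    using \<psi>2 by (simp add: set_integrable_def)
  have \<psi>_int: "integrable lebesgue (\<lambda>x. indicator D x * \<psi> x)"
  proof (rule Bochner_Integration.integrable_bound[OF Bochner_Integration.integrable_add[OF integrable_indicator_D \<psi>2_int]])
    show "AE x in lebesgue. norm (indicator D x * \<psi> x) \<le> norm (indicator D x + indicator D x * (\<psi> x)\<^sup>2)"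
      using abs_le_one_plus_square by (auto simp: indicator_def intro!: AE_I2)
  qed simp
  have \<phi>_int: "integrable lebesgue (\<lambda>x. indicator D x * \<phi> x)"
    by (rule integrable_bounded_on_D[OF \<phi>_meas, of M]) (use M in \<open>auto simp: indicator_def\<close>)
  have weight_int: "integrable lebesgue (\<lambda>x. indicator D x * ((\<psi> x)\<^sup>2 / \<phi> x))"
  proof (rule Bochner_Integration.integrable_bound[OF integrable_mult_right[OF \<psi>2_int, of "1 / m"]])
    have "(\<lambda>x. indicator D x * ((\<psi> x)\<^sup>2 / \<phi> x)) = (\<lambda>x. (indicator D x * \<psi> x)\<^sup>2 * (indicator D x * (1 / \<phi> x)))"
      by (auto simp: indicator_def fun_eq_iff)
    then show "(\<lambda>x. indicator D x * ((\<psi> x)\<^sup>2 / \<phi> x)) \<in> borel_measurable lebesgue"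
      by (simp only:) measurable
    have "(\<psi> x)\<^sup>2 / \<phi> x \<le> (\<psi> x)\<^sup>2 / m" if "x \<in> D" for x
      using m that \<phi>_D_pos by (intro divide_left_mono) auto
    then show "AE x in lebesgue. norm (indicator D x * ((\<psi> x)\<^sup>2 / \<phi> x)) \<le> norm (1 / m * (indicator D x * (\<psi> x)\<^sup>2))"
      using \<phi>_D_pos m by (auto simp: indicator_def abs_of_pos intro!: AE_I2)
  qed
  have a\<psi>2_int: "integrable lebesgue (\<lambda>x. indicator D x * (a x * (\<psi> x)\<^sup>2))"
  proof (rule Bochner_Integration.integrable_bound[OF integrable_mult_right[OF \<psi>2_int, of A]])
    have "(\<lambda>x. indicator D x * (a x * (\<psi> x)\<^sup>2)) = (\<lambda>x. (indicator D x * a x) * (indicator D x * \<psi> x)\<^sup>2)"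
      by (auto simp: indicator_def fun_eq_iff)
    then show "(\<lambda>x. indicator D x * (a x * (\<psi> x)\<^sup>2)) \<in> borel_measurable lebesgue" by simp
  qed (use a_bound in \<open>auto simp: indicator_def abs_mult intro!: AE_I2 mult_right_mono
        intro: order_trans[OF _ abs_ge_self]\<close>)
  have pointwise: "indicator D x * ((\<psi> x)\<^sup>2 / \<phi> x * nlop K D \<phi> x) \<le> indicator D x * (- (a x + l) * (\<psi> x)\<^sup>2)" for x
  proof (cases "x \<in> D")
    case True
    have "(\<psi> x)\<^sup>2 / \<phi> x * nlop K D \<phi> x \<le> (\<psi> x)\<^sup>2 / \<phi> x * nlop K \<Omega> \<phi> x"
      using nlop_D_le_nlop[OF True \<phi>_nonneg \<phi>_integrable[OF True]] \<phi>_D_pos[OF True]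
      by (intro mult_left_mono) auto
    also have "\<dots> \<le> (\<psi> x)\<^sup>2 / \<phi> x * (- (a x + l) * \<phi> x)"
      using supersolution[OF True] \<phi>_D_pos[OF True] by (intro mult_left_mono) (auto simp: algebra_simps)
    finally show ?thesis using True \<phi>_D_pos[OF True] by (simp add: mult.commute)
  qed simp
  have "(\<integral>x. indicator D x * (\<psi> x * nlop K D \<psi> x) \<partial>lebesgue)
      \<le> (\<integral>x. indicator D x * ((\<psi> x)\<^sup>2 / \<phi> x * nlop K D \<phi> x) \<partial>lebesgue)"
    by (rule integral_nlop_le_weighted[OF \<phi>_D_pos \<phi>_int \<psi>_int weight_int])
  also have "\<dots> \<le> (\<integral>x. indicator D x * (- (a x + l) * (\<psi> x)\<^sup>2) \<partial>lebesgue)"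
    using integral_mult_nlop(1)[OF \<phi>_int weight_int] a\<psi>2_int \<psi>2_int pointwise
    by (intro integral_mono) (auto simp: algebra_simps)
  also have "\<dots> = - (\<integral>x. indicator D x * (a x * (\<psi> x)\<^sup>2) \<partial>lebesgue) - l * S"
    using a\<psi>2_int \<psi>2_int by (simp add: S_def set_lebesgue_integral_def algebra_simps)
  finally have "(LINT x:D|lebesgue. (nlop K D \<psi> x + a x * \<psi> x) * \<psi> x) \<le> - l * S"
    using integral_mult_nlop(1)[OF \<psi>_int \<psi>_int] a\<psi>2_int
    by (simp add: set_lebesgue_integral_def algebra_simps power2_eq_square)
  moreover have "S > 0"
    using \<psi>_nonzero integral_nonneg_AE[of "\<lambda>x. indicator D x * (\<psi> x)\<^sup>2" lebesgue]
    by (simp add: S_def set_lebesgue_integral_def less_le)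
  ultimately show ?thesis by (simp add: S_def[symmetric] field_simps)
qed

end

context interval_kernel
begin

lemma lambda_p_le_lambda_v:
  assumes a_cont: "continuous_on (closure \<Omega>) a" and a_bound: "\<And>x. x \<in> \<Omega> \<Longrightarrow> \<bar>a x\<bar> \<le> A"
  shows "lambda_p K \<Omega> a \<le> lambda_v K D a"
  unfolding lambda_p_def
proof (rule Sup_least)
  fix z assume "z \<in> {ereal l | l. \<exists>\<phi>.
      continuous_on (closure \<Omega>) \<phi> \<and> (\<forall>x\<in>closure \<Omega>. \<phi> x > 0) \<and>
      (\<forall>x\<in>\<Omega>. set_integrable lebesgue \<Omega> (\<lambda>y. K x y * \<phi> y)) \<and>
      (\<forall>x\<in>\<Omega>. nlop K \<Omega> \<phi> x + a x * \<phi> x + l * \<phi> x \<le> 0)}"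
  then obtain l \<phi> where z: "z = ereal l" and \<phi>_cont: "continuous_on (closure \<Omega>) \<phi>"
    and \<phi>_pos: "\<forall>x\<in>closure \<Omega>. \<phi> x > 0"
    and \<phi>_integrable: "\<forall>x\<in>\<Omega>. set_integrable lebesgue \<Omega> (\<lambda>y. K x y * \<phi> y)"
    and supersolution: "\<forall>x\<in>\<Omega>. nlop K \<Omega> \<phi> x + a x * \<phi> x + l * \<phi> x \<le> 0"
    by blast
  have Icc_subset: "{c..d} \<subseteq> closure \<Omega>"
    using closure_mono[OF interval_subset] cd by simp
  show "z \<le> lambda_v K D a"
    unfolding lambda_v_def z
  proof (rule Inf_greatest, safe)
    fix \<psi> :: "real \<Rightarrow> real"
    assume "set_borel_measurable lebesgue D \<psi>" "set_integrable lebesgue D (\<lambda>x. (\<psi> x)\<^sup>2)"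
      "(LINT x:D|lebesgue. (\<psi> x)\<^sup>2) \<noteq> 0"
    then have "l \<le> - (LINT x:D|lebesgue. (nlop K D \<psi> x + a x * \<psi> x) * \<psi> x) / (LINT x:D|lebesgue. (\<psi> x)\<^sup>2)"
    proof (rule rayleigh_quotient_ge[rotated 7])
      show "\<And>x. x \<in> {c..d} \<Longrightarrow> \<phi> x > 0" using \<phi>_pos Icc_subset by auto
      show "continuous_on {c..d} \<phi>" by (rule continuous_on_subset[OF \<phi>_cont Icc_subset])
      show "\<And>y. y \<in> \<Omega> \<Longrightarrow> 0 \<le> \<phi> y" using \<phi>_pos closure_subset by (auto intro: less_imp_le)
      show "\<And>x. x \<in> D \<Longrightarrow> set_integrable lebesgue \<Omega> (\<lambda>y. K x y * \<phi> y)"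
        using \<phi>_integrable D_subset by auto
      show "\<And>x. x \<in> D \<Longrightarrow> nlop K \<Omega> \<phi> x + a x * \<phi> x + l * \<phi> x \<le> 0"
        using supersolution D_subset by auto
      show "continuous_on D a"
        by (rule continuous_on_subset[OF a_cont order_trans[OF D_subset closure_subset]])
      show "\<And>x. x \<in> D \<Longrightarrow> \<bar>a x\<bar> \<le> A" using a_bound D_subset by auto
    qed
    then show "ereal l \<le> ereal (- (LINT x:D|lebesgue. (nlop K D \<psi> x + a x * \<psi> x) * \<psi> x)
        / (LINT x:D|lebesgue. (\<psi> x)\<^sup>2))" by simp
  qed
qed

end

context interval_kernel
begin

lemma integrable_rayleigh_numerator:
  fixes \<phi> a :: "real \<Rightarrow> real"
  assumes \<phi>_meas: "set_borel_measurable lebesgue D \<phi>" and \<phi>_bound: "\<And>x. x \<in> D \<Longrightarrow> \<bar>\<phi> x\<bar> \<le> M"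
    and a_cont: "continuous_on D a" and a_bound: "\<And>x. x \<in> D \<Longrightarrow> \<bar>a x\<bar> \<le> A"
  shows "integrable lebesgue (\<lambda>x. indicator D x * ((nlop K D \<phi> x + a x * \<phi> x) * \<phi> x))"
proof (rule integrable_bounded_on_D)
  have [measurable]: "(\<lambda>x. indicator D x * \<phi> x) \<in> borel_measurable lebesgue"
    using \<phi>_meas by (simp add: set_borel_measurable_def)
  have [measurable]: "(\<lambda>x. indicator D x * a x) \<in> borel_measurable lebesgue"
    by (rule borel_measurable_lebesgue_indicator_continuous[OF D_borel a_cont])
  have "(\<lambda>x. indicator D x * ((nlop K D \<phi> x + a x * \<phi> x) * \<phi> x))
      = (\<lambda>x. ((indicator D x * nlop K D \<phi> x) + (indicator D x * a x) * (indicator D x * \<phi> x))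
             * (indicator D x * \<phi> x))"
    by (auto simp: fun_eq_iff indicator_def)
  then show "(\<lambda>x. indicator D x * ((nlop K D \<phi> x + a x * \<phi> x) * \<phi> x)) \<in> borel_measurable lebesgue"
    using nlop_measurable[OF \<phi>_meas] by simp
  have \<phi>_int: "set_integrable lebesgue D \<phi>"
    unfolding set_integrable_def
  proof (rule integrable_bounded_on_D[of _ M])
    show "\<bar>indicator D x *\<^sub>R \<phi> x\<bar> \<le> M * indicator D x" for x
      using \<phi>_bound[of x] by (auto simp: indicator_def)
  qed simp
  define I where "I = (\<integral>y. \<bar>indicator D y * \<phi> y\<bar> \<partial>lebesgue)"
  fix x
  show "\<bar>indicator D x * ((nlop K D \<phi> x + a x * \<phi> x) * \<phi> x)\<bar> \<le> ((B * I + A * M) * M) * indicator D x"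
  proof (cases "x \<in> D")
    case True
    have "\<bar>nlop K D \<phi> x\<bar> \<le> B * I" using abs_nlop_le[OF \<phi>_int True] by (simp add: I_def)
    moreover have "\<bar>a x * \<phi> x\<bar> \<le> A * M"
      using a_bound[OF True] \<phi>_bound[OF True] by (simp add: abs_mult mult_mono)
    ultimately have "\<bar>nlop K D \<phi> x + a x * \<phi> x\<bar> \<le> B * I + A * M" by linarith
    then show ?thesis
      using True \<phi>_bound[OF True] by (simp add: abs_mult mult_mono)
  qed simp
qed

lemma rayleigh_quotient_le:
  fixes \<phi> a h :: "real \<Rightarrow> real" and l A M H :: real
  assumes \<phi>_cont: "continuous_on \<Omega> \<phi>" and \<phi>_nonneg: "\<And>y. y \<in> \<Omega> \<Longrightarrow> 0 \<le> \<phi> y"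
    and \<phi>_le: "\<And>y. y \<in> \<Omega> \<Longrightarrow> \<phi> y \<le> M"
    and subsolution: "\<And>x. x \<in> D \<Longrightarrow> 0 \<le> nlop K \<Omega> \<phi> x + (a x + l) * \<phi> x"
    and a_cont: "continuous_on D a" and a_bound: "\<And>x. x \<in> D \<Longrightarrow> \<bar>a x\<bar> \<le> A"
    and h_cont: "continuous_on D h" and h_bound: "\<And>x. x \<in> D \<Longrightarrow> \<bar>h x\<bar> \<le> H"
    and truncation: "\<And>x. x \<in> D \<Longrightarrow> nlop K \<Omega> \<phi> x - nlop K D \<phi> x \<le> h x"
    and mass_pos: "(LINT x:D|lebesgue. (\<phi> x)\<^sup>2) > 0"
  shows "set_borel_measurable lebesgue D \<phi>" "set_integrable lebesgue D (\<lambda>x. (\<phi> x)\<^sup>2)"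
    "-(LINT x:D|lebesgue. (nlop K D \<phi> x + a x * \<phi> x) * \<phi> x) / (LINT x:D|lebesgue. (\<phi> x)\<^sup>2)
       \<le> l + (LINT x:D|lebesgue. h x * \<phi> x) / (LINT x:D|lebesgue. (\<phi> x)\<^sup>2)"
proof -
  have \<phi>_D: "0 \<le> \<phi> x" "\<phi> x \<le> M" if "x \<in> D" for x
    using \<phi>_nonneg \<phi>_le D_subset that by auto
  have [measurable]: "(\<lambda>x. indicator D x * \<phi> x) \<in> borel_measurable lebesgue"
    by (rule borel_measurable_lebesgue_indicator_continuous[OF D_borel continuous_on_subset[OF \<phi>_cont D_subset]])
  then show \<phi>_meas: "set_borel_measurable lebesgue D \<phi>" by (simp add: set_borel_measurable_def)
  have [measurable]: "(\<lambda>x. indicator D x * h x) \<in> borel_measurable lebesgue"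
    by (rule borel_measurable_lebesgue_indicator_continuous[OF D_borel h_cont])
  have \<phi>2_int: "integrable lebesgue (\<lambda>x. indicator D x * (\<phi> x)\<^sup>2)"
  proof (rule integrable_bounded_on_D)
    have "(\<lambda>x. indicator D x * (\<phi> x)\<^sup>2) = (\<lambda>x. (indicator D x * \<phi> x)\<^sup>2)"
      by (auto simp: fun_eq_iff indicator_def)
    then show "(\<lambda>x. indicator D x * (\<phi> x)\<^sup>2) \<in> borel_measurable lebesgue" by simp
    show "\<bar>indicator D x * (\<phi> x)\<^sup>2\<bar> \<le> (M * M) * indicator D x" for x
      using \<phi>_D[of x] by (auto simp: indicator_def power2_eq_square intro: mult_mono)
  qed
  then show "set_integrable lebesgue D (\<lambda>x. (\<phi> x)\<^sup>2)" by (simp add: set_integrable_def)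
  have h\<phi>_int: "integrable lebesgue (\<lambda>x. indicator D x * (h x * \<phi> x))"
  proof (rule integrable_bounded_on_D)
    have "(\<lambda>x. indicator D x * (h x * \<phi> x)) = (\<lambda>x. (indicator D x * h x) * (indicator D x * \<phi> x))"
      by (auto simp: fun_eq_iff indicator_def)
    then show "(\<lambda>x. indicator D x * (h x * \<phi> x)) \<in> borel_measurable lebesgue" by simp
    show "\<bar>indicator D x * (h x * \<phi> x)\<bar> \<le> (H * M) * indicator D x" for x
      using \<phi>_D[of x] h_bound[of x] by (auto simp: indicator_def abs_mult intro: mult_mono)
  qed
  have numerator_int: "integrable lebesgue (\<lambda>x. indicator D x * ((nlop K D \<phi> x + a x * \<phi> x) * \<phi> x))"
    by (rule integrable_rayleigh_numerator[OF \<phi>_meas _ a_cont a_bound, of M]) (use \<phi>_D in auto)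
  have pointwise: "- (indicator D x * ((nlop K D \<phi> x + a x * \<phi> x) * \<phi> x))
      \<le> l * (indicator D x * (\<phi> x)\<^sup>2) + indicator D x * (h x * \<phi> x)" for x
  proof (cases "x \<in> D")
    case True
    have "- (nlop K \<Omega> \<phi> x + a x * \<phi> x) * \<phi> x \<le> (l * \<phi> x) * \<phi> x"
      using subsolution[OF True] \<phi>_D[OF True] by (intro mult_right_mono) (auto simp: algebra_simps)
    moreover have "(nlop K \<Omega> \<phi> x - nlop K D \<phi> x) * \<phi> x \<le> h x * \<phi> x"
      using truncation[OF True] \<phi>_D[OF True] by (intro mult_right_mono) auto
    ultimately show ?thesis using True by (simp add: algebra_simps power2_eq_square)
  qed simp
  have "- (LINT x:D|lebesgue. (nlop K D \<phi> x + a x * \<phi> x) * \<phi> x)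
      \<le> l * (LINT x:D|lebesgue. (\<phi> x)\<^sup>2) + (LINT x:D|lebesgue. h x * \<phi> x)"
  proof -
    have "- (\<integral>x. indicator D x * ((nlop K D \<phi> x + a x * \<phi> x) * \<phi> x) \<partial>lebesgue)
        \<le> (\<integral>x. l * (indicator D x * (\<phi> x)\<^sup>2) + indicator D x * (h x * \<phi> x) \<partial>lebesgue)"
      unfolding integral_minus[symmetric]
      by (rule integral_mono[OF _ _ pointwise]) (use numerator_int \<phi>2_int h\<phi>_int in auto)
    then show ?thesis using \<phi>2_int h\<phi>_int by (simp add: set_lebesgue_integral_def)
  qed
  then show "-(LINT x:D|lebesgue. (nlop K D \<phi> x + a x * \<phi> x) * \<phi> x) / (LINT x:D|lebesgue. (\<phi> x)\<^sup>2)
       \<le> l + (LINT x:D|lebesgue. h x * \<phi> x) / (LINT x:D|lebesgue. (\<phi> x)\<^sup>2)"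
    using mass_pos by (simp add: field_simps)
qed

end

lemma nn_integral_decay_right:
  fixes \<beta> x p :: real
  assumes b: "\<beta> > 1" and xp: "x \<le> p"
  shows "(\<integral>\<^sup>+y. ennreal (indicator {p..} y * (1 + (y - x)) powr (-\<beta>)) \<partial>lebesgue)
         = ennreal ((1 + (p - x)) powr (1 - \<beta>) / (\<beta> - 1))"
proof -
  define F where "F y = - ((1 + (y - x)) powr (1 - \<beta>) / (\<beta> - 1))" for y
  have "(\<integral>\<^sup>+y. ennreal ((1 + (y - x)) powr (-\<beta>)) * indicator {p..} y \<partial>lborel) = ennreal (0 - F p)"
  proof (rule nn_integral_FTC_atLeast)
    show "(\<lambda>y. (1 + (y - x)) powr (-\<beta>)) \<in> borel_measurable borel" by measurable
    fix y assume y: "p \<le> y"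
    then have pos: "0 < 1 + (y - x)" using xp by linarith
    show "DERIV F y :> (1 + (y - x)) powr (-\<beta>)"
    proof -
      have d1: "DERIV (\<lambda>y. 1 + (y - x)) y :> 1"
        by (auto intro!: derivative_eq_intros)
      have "DERIV (\<lambda>y. (1 + (y - x)) powr (1 - \<beta>)) y :> (1 - \<beta>) * (1 + (y - x)) powr (1 - \<beta> - of_nat 1) * 1"
        by (rule DERIV_fun_powr[OF d1 pos])
      then have "DERIV (\<lambda>y. - ((1 + (y - x)) powr (1 - \<beta>) / (\<beta> - 1))) y :>
          - ((1 - \<beta>) * (1 + (y - x)) powr (1 - \<beta> - of_nat 1) * 1 / (\<beta> - 1))"
        by (intro DERIV_minus DERIV_cdivide)
      moreover have "- ((1 - \<beta>) * (1 + (y - x)) powr (1 - \<beta> - of_nat 1) * 1 / (\<beta> - 1)) = (1 + (y - x)) powr (-\<beta>)"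
        using b by (simp add: field_simps)
      ultimately show ?thesis by (simp add: F_def[abs_def])
    qed
    show "0 \<le> (1 + (y - x)) powr (-\<beta>)" by simp
  next
    have "filterlim (\<lambda>y. 1 + (y - x)) at_top at_top" by real_asymp
    then have "((\<lambda>y. (1 + (y - x)) powr (1 - \<beta>)) \<longlongrightarrow> 0) at_top"
      by (rule tendsto_neg_powr[rotated]) (use b in simp)
    then have "((\<lambda>y. (1 + (y - x)) powr (1 - \<beta>) / (\<beta> - 1)) \<longlongrightarrow> 0 / (\<beta> - 1)) at_top"
      by (intro tendsto_divide) (use b in auto)
    then show "(F \<longlongrightarrow> 0) at_top" unfolding F_def using tendsto_minus by fastforce
  qed
  moreover have "(\<integral>\<^sup>+y. ennreal (indicator {p..} y * (1 + (y - x)) powr (-\<beta>)) \<partial>lebesgue)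
      = (\<integral>\<^sup>+y. ennreal ((1 + (y - x)) powr (-\<beta>)) * indicator {p..} y \<partial>lborel)"
    by (simp add: nn_integral_completion indicator_mult_ennreal mult.commute)
  ultimately show ?thesis by (simp add: F_def)
qed

lemma nn_integral_decay_left:
  fixes \<beta> x p :: real
  assumes b: "\<beta> > 1" and xp: "p \<le> x"
  shows "(\<integral>\<^sup>+y. ennreal (indicator {..p} y * (1 + (x - y)) powr (-\<beta>)) \<partial>lebesgue)
         = ennreal ((1 + (x - p)) powr (1 - \<beta>) / (\<beta> - 1))"
proof -
  have "(\<integral>\<^sup>+y. ennreal (indicator {..p} y * (1 + (x - y)) powr (-\<beta>)) \<partial>lebesgue)
      = ennreal \<bar>-1\<bar> * (\<integral>\<^sup>+z. ennreal (indicator {..p} (0 + -1 * z) * (1 + (x - (0 + -1 * z))) powr (-\<beta>)) \<partial>lebesgue)"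
    by (rule nn_integral_real_affine_lebesgue) auto
  also have "\<dots> = (\<integral>\<^sup>+z. ennreal (indicator {-p..} z * (1 + (z - (-x))) powr (-\<beta>)) \<partial>lebesgue)"
  proof -
    have e1: "ennreal \<bar>-1::real\<bar> = 1" by simp
    show ?thesis unfolding e1 mult.left_neutral
      by (intro nn_integral_cong) (auto simp: indicator_def add.commute)
  qed
  also have "\<dots> = ennreal ((1 + (-p - (-x))) powr (1 - \<beta>) / (\<beta> - 1))"
    by (rule nn_integral_decay_right) (use b xp in auto)
  finally show ?thesis by simp
qed

lemma integral_decay_right:
  fixes \<beta> x p :: real
  assumes b: "\<beta> > 1" and xp: "x \<le> p"
  shows "integrable lebesgue (\<lambda>y. indicator {p..} y * (1 + (y - x)) powr (-\<beta>))"
    "(\<integral>y. indicator {p..} y * (1 + (y - x)) powr (-\<beta>) \<partial>lebesgue) = (1 + (p - x)) powr (1 - \<beta>) / (\<beta> - 1)"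
proof -
  have "(\<integral>\<^sup>+y. ennreal (indicator {p..} y * (1 + (y - x)) powr (-\<beta>)) \<partial>lebesgue)
         = ennreal ((1 + (p - x)) powr (1 - \<beta>) / (\<beta> - 1))" by (rule nn_integral_decay_right[OF b xp])
  then have "integrable lebesgue (\<lambda>y. indicator {p..} y * (1 + (y - x)) powr (-\<beta>)) \<and>
      (\<integral>y. indicator {p..} y * (1 + (y - x)) powr (-\<beta>) \<partial>lebesgue) = (1 + (p - x)) powr (1 - \<beta>) / (\<beta> - 1)"
    by (subst (asm) nn_integral_eq_integrable) (use b in auto)
  then show "integrable lebesgue (\<lambda>y. indicator {p..} y * (1 + (y - x)) powr (-\<beta>))"
    "(\<integral>y. indicator {p..} y * (1 + (y - x)) powr (-\<beta>) \<partial>lebesgue) = (1 + (p - x)) powr (1 - \<beta>) / (\<beta> - 1)"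
    by auto
qed

lemma integral_decay_left:
  fixes \<beta> x p :: real
  assumes b: "\<beta> > 1" and xp: "p \<le> x"
  shows "integrable lebesgue (\<lambda>y. indicator {..p} y * (1 + (x - y)) powr (-\<beta>))"
    "(\<integral>y. indicator {..p} y * (1 + (x - y)) powr (-\<beta>) \<partial>lebesgue) = (1 + (x - p)) powr (1 - \<beta>) / (\<beta> - 1)"
proof -
  have "(\<integral>\<^sup>+y. ennreal (indicator {..p} y * (1 + (x - y)) powr (-\<beta>)) \<partial>lebesgue)
         = ennreal ((1 + (x - p)) powr (1 - \<beta>) / (\<beta> - 1))" by (rule nn_integral_decay_left[OF b xp])
  then have "integrable lebesgue (\<lambda>y. indicator {..p} y * (1 + (x - y)) powr (-\<beta>)) \<and>
      (\<integral>y. indicator {..p} y * (1 + (x - y)) powr (-\<beta>) \<partial>lebesgue) = (1 + (x - p)) powr (1 - \<beta>) / (\<beta> - 1)"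
    by (subst (asm) nn_integral_eq_integrable) (use b in auto)
  then show "integrable lebesgue (\<lambda>y. indicator {..p} y * (1 + (x - y)) powr (-\<beta>))"
    "(\<integral>y. indicator {..p} y * (1 + (x - y)) powr (-\<beta>) \<partial>lebesgue) = (1 + (x - p)) powr (1 - \<beta>) / (\<beta> - 1)"
    by auto
qed


lemma decay_le_two_tails:
  fixes \<alpha> x y p q :: real
  assumes "p \<le> x" "x \<le> q" "y \<le> p \<or> q \<le> y"
  shows "(1 + \<bar>x - y\<bar>) powr (-\<alpha>)
    \<le> indicator {q..} y * (1 + (y - x)) powr (-\<alpha>) + indicator {..p} y * (1 + (x - y)) powr (-\<alpha>)"
proof (cases "q \<le> y")
  case True
  then have "\<bar>x - y\<bar> = y - x" "indicator {q..} y = (1::real)" using assms by auto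
  moreover have "0 \<le> indicator {..p} y * (1 + (x - y)) powr (-\<alpha>)" by simp
  ultimately show ?thesis by simp
next
  case False
  then have "\<bar>x - y\<bar> = x - y" "indicator {..p} y = (1::real)" using assms by auto
  moreover have "0 \<le> indicator {q..} y * (1 + (y - x)) powr (-\<alpha>)" by simp
  ultimately show ?thesis by simp
qed

lemma integral_two_tails:
  fixes \<alpha> x p q :: real
  assumes \<alpha>: "\<alpha> > 1" and "p \<le> x" "x \<le> q"
  defines "T \<equiv> \<lambda>y. indicator {q..} y * (1 + (y - x)) powr (-\<alpha>) + indicator {..p} y * (1 + (x - y)) powr (-\<alpha>)"
  shows "integrable lebesgue T"
    and "integral\<^sup>L lebesgue T = ((1 + (q - x)) powr (1 - \<alpha>) + (1 + (x - p)) powr (1 - \<alpha>)) / (\<alpha> - 1)"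
  using integral_decay_right[OF \<alpha> \<open>x \<le> q\<close>] integral_decay_left[OF \<alpha> \<open>p \<le> x\<close>]
  by (simp_all add: T_def add_divide_distrib)

text \<open>For \<open>k = M C / (\<alpha> - 1)\<close> this bounds \<open>L\<^sub>\<Omega>[\<phi>](x) - L\<^bsub>\<Omega> \<inter> (-R, R)\<^esub>[\<phi>](x)\<close> whenever \<open>0 \<le> \<phi> \<le> M\<close>.\<close>
definition truncation_weight :: "real \<Rightarrow> real \<Rightarrow> real \<Rightarrow> real \<Rightarrow> real" where
  "truncation_weight k \<alpha> R x = k * ((1 + (R - x)) powr (1 - \<alpha>) + (1 + (x + R)) powr (1 - \<alpha>))"

lemma continuous_on_truncation_weight: "continuous_on {-R<..<R} (truncation_weight k \<alpha> R)"
  unfolding truncation_weight_def[abs_def]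
  by (intro continuous_intros) auto


lemma truncation_weight_bounds:
  assumes "\<bar>x\<bar> < R" "0 \<le> k" "\<alpha> > 1"
  shows "0 \<le> truncation_weight k \<alpha> R x" "truncation_weight k \<alpha> R x \<le> 2 * k"
proof -
  show "0 \<le> truncation_weight k \<alpha> R x" using assms by (simp add: truncation_weight_def)
  have "(1 + (R - x)) powr (1 - \<alpha>) \<le> 1" "(1 + (x + R)) powr (1 - \<alpha>) \<le> 1"
    using assms by (auto intro!: powr_nonpos_le_one)
  then have "(1 + (R - x)) powr (1 - \<alpha>) + (1 + (x + R)) powr (1 - \<alpha>) \<le> 2" by linarith
  from mult_left_mono[OF this assms(2)] show "truncation_weight k \<alpha> R x \<le> 2 * k"
    unfolding truncation_weight_def by (simp add: mult.commute)
qed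

lemma truncation_weight_le_inner:
  assumes "\<bar>x\<bar> < r" "r \<le> R" "0 \<le> k" "\<alpha> > 1"
  shows "truncation_weight k \<alpha> R x \<le> 2 * k * (1 + (R - r)) powr (1 - \<alpha>)"
proof -
  have "(1 + (R - x)) powr (1 - \<alpha>) \<le> (1 + (R - r)) powr (1 - \<alpha>)"
    using assms by (intro powr_mono2') auto
  moreover have "(1 + (x + R)) powr (1 - \<alpha>) \<le> (1 + (R - r)) powr (1 - \<alpha>)"
    using assms by (intro powr_mono2') auto
  ultimately have "(1 + (R - x)) powr (1 - \<alpha>) + (1 + (x + R)) powr (1 - \<alpha>) \<le> 2 * (1 + (R - r)) powr (1 - \<alpha>)"
    by linarith
  from mult_left_mono[OF this assms(3)] show ?thesis
    unfolding truncation_weight_def by (simp add: mult.assoc mult.left_commute)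
qed

lemma power2_powr_one_minus: "0 < (y::real) \<Longrightarrow> (y powr (1 - \<alpha>))\<^sup>2 = y powr (-(2 * \<alpha> - 2))"
  by (simp add: powr_power algebra_simps)

lemma truncation_weight_square:
  assumes "0 \<le> k" "\<alpha> > 3/2" and A: "A \<in> sets lebesgue" "A \<subseteq> {-R<..<R}"
  shows "integrable lebesgue (\<lambda>x. indicator A x * (truncation_weight k \<alpha> R x)\<^sup>2)"
    "(\<integral>x. indicator A x * (truncation_weight k \<alpha> R x)\<^sup>2 \<partial>lebesgue) \<le> 4 * k\<^sup>2 / (2 * \<alpha> - 3)"
proof -
  have b: "2 * \<alpha> - 2 > 1" using assms by simp
  define g where "g x = 2 * k\<^sup>2 * (indicator {..R} x * (1 + (R - x)) powr (-(2 * \<alpha> - 2))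
                    + indicator {-R..} x * (1 + (x - -R)) powr (-(2 * \<alpha> - 2)))" for x
  have gi: "integrable lebesgue g"
    unfolding g_def[abs_def] using integral_decay_left(1)[OF b order_refl, of R] integral_decay_right(1)[OF b order_refl, of "-R"] by simp
  have gint: "(\<integral>x. g x \<partial>lebesgue) = 4 * k\<^sup>2 / (2 * \<alpha> - 3)"
  proof -
    have "(\<integral>x. g x \<partial>lebesgue) = 2 * k\<^sup>2 * ((1 + (R - R)) powr (1 - (2 * \<alpha> - 2)) / (2 * \<alpha> - 2 - 1)
         + (1 + (-R - -R)) powr (1 - (2 * \<alpha> - 2)) / (2 * \<alpha> - 2 - 1))"
      unfolding g_def[abs_def]
      using integral_decay_left[OF b order_refl, of R] integral_decay_right[OF b order_refl, of "-R"] by simp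
    then show ?thesis by (simp add: field_simps)
  qed
  have fm: "(\<lambda>x. indicator A x * (truncation_weight k \<alpha> R x)\<^sup>2) \<in> borel_measurable lebesgue"
  proof -
    have "(\<lambda>x. indicator {-R<..<R} x * (truncation_weight k \<alpha> R x)\<^sup>2) \<in> borel_measurable lebesgue"
      by (rule borel_measurable_lebesgue_indicator_continuous)
         (auto intro!: continuous_intros continuous_on_truncation_weight)
    moreover have "(\<lambda>x. indicator A x * (truncation_weight k \<alpha> R x)\<^sup>2)
        = (\<lambda>x. indicator A x * (indicator {-R<..<R} x * (truncation_weight k \<alpha> R x)\<^sup>2))"
      using A(2) by (auto simp: fun_eq_iff indicator_def)
    ultimately show ?thesis using A(1) by simp
  qed
  have fb: "indicator A x * (truncation_weight k \<alpha> R x)\<^sup>2 \<le> g x" for x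
  proof (cases "x \<in> A")
    case True
    then have "x \<in> {-R<..<R}" using A(2) by auto
    have p1: "0 < 1 + (R - x)" "0 < 1 + (x + R)" using \<open>x \<in> {-R<..<R}\<close> by auto
    have "(truncation_weight k \<alpha> R x)\<^sup>2 \<le> 2 * k\<^sup>2 * (((1 + (R - x)) powr (1 - \<alpha>))\<^sup>2 + ((1 + (x + R)) powr (1 - \<alpha>))\<^sup>2)"
    proof -
      have uv: "(u + v)\<^sup>2 \<le> 2 * (u\<^sup>2 + v\<^sup>2)" for u v :: real
      proof -
        have "0 \<le> (u - v)\<^sup>2" by simp
        then show ?thesis by (simp add: power2_eq_square algebra_simps)
      qed
      define aa where "aa = (1 + (R - x)) powr (1 - \<alpha>)"
      define bb where "bb = (1 + (x + R)) powr (1 - \<alpha>)"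
      have "(truncation_weight k \<alpha> R x)\<^sup>2 = k\<^sup>2 * (aa + bb)\<^sup>2" by (simp add: truncation_weight_def aa_def bb_def power_mult_distrib)
      also have "\<dots> \<le> k\<^sup>2 * (2 * (aa\<^sup>2 + bb\<^sup>2))" by (rule mult_left_mono[OF uv]) simp
      also have "\<dots> = 2 * k\<^sup>2 * (aa\<^sup>2 + bb\<^sup>2)" by simp
      finally show ?thesis by (simp only: aa_def bb_def)
    qed
    also have "\<dots> = g x" using \<open>x \<in> {-R<..<R}\<close> p1 by (simp add: g_def power2_powr_one_minus add.commute)
    finally show ?thesis using True by simp
  next
    case False
    have "0 \<le> g x" using assms by (simp add: g_def)
    then show ?thesis using False by simp
  qed
  show fi: "integrable lebesgue (\<lambda>x. indicator A x * (truncation_weight k \<alpha> R x)\<^sup>2)"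
    by (rule Bochner_Integration.integrable_bound[OF gi fm]) (auto intro!: AE_I2 order_trans[OF fb abs_ge_self])
  have "(\<integral>x. indicator A x * (truncation_weight k \<alpha> R x)\<^sup>2 \<partial>lebesgue) \<le> (\<integral>x. g x \<partial>lebesgue)"
    by (rule integral_mono[OF fi gi fb])
  then show "(\<integral>x. indicator A x * (truncation_weight k \<alpha> R x)\<^sup>2 \<partial>lebesgue) \<le> 4 * k\<^sup>2 / (2 * \<alpha> - 3)"
    using gint by linarith
qed


lemma eventually_error_le_mass:
  fixes S E :: "nat \<Rightarrow> real" and c1 W \<alpha> \<epsilon> :: real and n1 :: nat
  assumes S_mono: "\<And>r n. r \<le> n \<Longrightarrow> S r \<le> S n"
    and S_nonneg: "\<And>n. 0 \<le> S n" and S_pos: "S n1 > 0"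
    and W: "0 \<le> W" and \<alpha>: "\<alpha> > 1" and c1: "0 \<le> c1"
    and E_bound: "\<And>r n t. r \<le> n \<Longrightarrow> n1 \<le> n \<Longrightarrow> t > 0 \<Longrightarrow>
        E n \<le> c1 * real r * (1 + (real n - real r)) powr (1 - \<alpha>) + (t * (S n - S r) + W / t) / 2"
    and \<epsilon>: "\<epsilon> > 0"
  shows "eventually (\<lambda>n. E n \<le> \<epsilon> * S n) sequentially"
proof (cases "\<forall>B. \<exists>n. S n > B")
  \<comment> \<open>If \<open>S\<close> is unbounded take \<open>r = 0\<close> and \<open>t = \<epsilon>\<close>; otherwise take \<open>r\<close> with \<open>S r\<close> close to \<open>sup S\<close>.\<close>
  case True
  then obtain n2 where n2: "S n2 > W / \<epsilon>\<^sup>2" by blast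
  show ?thesis
  proof (rule eventually_sequentiallyI[of "max n1 n2"])
    fix n assume n: "max n1 n2 \<le> n"
    have Sn: "W / \<epsilon>\<^sup>2 \<le> S n" using n2 S_mono[of n2 n] n by simp
    have "E n \<le> c1 * real 0 * (1 + (real n - real 0)) powr (1 - \<alpha>) + (\<epsilon> * (S n - S 0) + W / \<epsilon>) / 2"
      by (rule E_bound) (use n \<epsilon> in auto)
    also have "\<dots> \<le> (\<epsilon> * S n + W / \<epsilon>) / 2" using S_nonneg[of 0] \<epsilon> by (simp add: algebra_simps)
    also have "W / \<epsilon> \<le> \<epsilon> * S n"
    proof -
      have "W / \<epsilon> = \<epsilon> * (W / \<epsilon>\<^sup>2)" using \<epsilon> by (simp add: power2_eq_square field_simps)
      also have "\<dots> \<le> \<epsilon> * S n" using Sn \<epsilon> by (intro mult_left_mono) auto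
      finally show ?thesis .
    qed
    then have "(\<epsilon> * S n + W / \<epsilon>) / 2 \<le> \<epsilon> * S n" by simp
    finally show "E n \<le> \<epsilon> * S n" .
  qed
next
  case False
  then obtain B where B: "\<And>n. S n \<le> B" by (auto simp: not_less)
  have bdd: "bdd_above (range S)" by (rule bdd_aboveI2) (rule B)
  define L where "L = (SUP n. S n)"
  have SL: "S n \<le> L" for n unfolding L_def by (rule cSUP_upper[OF _ bdd]) simp
  define \<eta> where "\<eta> = \<epsilon> * S n1 / 2"
  have \<eta>: "\<eta> > 0" using \<epsilon> S_pos by (simp add: \<eta>_def)
  define \<delta> where "\<delta> = \<eta>\<^sup>2 / (W + 1)"
  have \<delta>: "\<delta> > 0" using \<eta> W by (simp add: \<delta>_def)
  obtain r where r: "L - \<delta> < S r"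
  proof -
    have "L - \<delta> < (SUP n. S n)" using \<delta> by (simp add: L_def)
    then show ?thesis using that less_cSUP_iff[of UNIV S "L - \<delta>"] bdd by auto
  qed
  define t where "t = (W + 1) / \<eta>"
  have t: "t > 0" using W \<eta> by (simp add: t_def)
  have second: "(t * (S n - S r) + W / t) / 2 \<le> \<eta>" if "r \<le> n" for n
  proof -
    have d: "S n - S r \<le> \<delta>" using SL[of n] r by simp
    have "t * (S n - S r) \<le> t * \<delta>" using d t by (intro mult_left_mono) auto
    also have "t * \<delta> = \<eta>"
    proof -
      have "W + 1 \<noteq> 0" "\<eta> \<noteq> 0" using \<eta> W by auto
      then show ?thesis unfolding t_def \<delta>_def by (simp add: power2_eq_square)
    qed
    finally have 1: "t * (S n - S r) \<le> \<eta>" .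
    have "W / t = W * \<eta> / (W + 1)" using \<eta> W by (simp add: t_def field_simps)
    also have "\<dots> \<le> \<eta>" using \<eta> W by (simp add: field_simps)
    finally show ?thesis using 1 by simp
  qed
  have lim: "(\<lambda>n::nat. c1 * real r * (1 + (real n - real r)) powr (1 - \<alpha>)) \<longlonglongrightarrow> c1 * real r * 0"
  proof (intro tendsto_mult tendsto_const)
    have "filterlim (\<lambda>n::nat. 1 + (real n - real r)) at_top sequentially" by real_asymp
    then show "(\<lambda>n::nat. (1 + (real n - real r)) powr (1 - \<alpha>)) \<longlonglongrightarrow> 0"
      by (rule tendsto_neg_powr[rotated]) (use \<alpha> in simp)
  qed
  then have ev: "eventually (\<lambda>n. c1 * real r * (1 + (real n - real r)) powr (1 - \<alpha>) < \<eta>) sequentially"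
    using \<eta> by (auto dest: order_tendstoD)
  then obtain n3 where n3: "\<And>n. n \<ge> n3 \<Longrightarrow> c1 * real r * (1 + (real n - real r)) powr (1 - \<alpha>) < \<eta>"
    by (auto simp: eventually_sequentially)
  show ?thesis
  proof (rule eventually_sequentiallyI[of "max n1 (max r n3)"])
    fix n assume n: "max n1 (max r n3) \<le> n"
    have "E n \<le> c1 * real r * (1 + (real n - real r)) powr (1 - \<alpha>) + (t * (S n - S r) + W / t) / 2"
      by (rule E_bound) (use n t in auto)
    also have "\<dots> \<le> \<eta> + \<eta>" using n3[of n] second[of n] n by (intro add_mono) auto
    also have "\<dots> = \<epsilon> * S n1" by (simp add: \<eta>_def)
    also have "\<dots> \<le> \<epsilon> * S n" using S_mono[of n1 n] n \<epsilon> by (intro mult_left_mono) auto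
    finally show "E n \<le> \<epsilon> * S n" .
  qed
qed


lemma truncation_weight_mult_le:
  fixes k \<alpha> R r t x y M :: real
  assumes x: "\<bar>x\<bar> < R" and r: "r \<le> R" and k: "0 \<le> k" and \<alpha>: "\<alpha> > 1" and t: "t > 0"
    and y: "0 \<le> y" "y \<le> M"
  shows "truncation_weight k \<alpha> R x * y
    \<le> (if \<bar>x\<bar> < r then 2 * k * (1 + (R - r)) powr (1 - \<alpha>) * M else t / 2 * y\<^sup>2)
       + (truncation_weight k \<alpha> R x)\<^sup>2 / (2 * t)"
proof (cases "\<bar>x\<bar> < r")
  case True
  then have "truncation_weight k \<alpha> R x * y \<le> (2 * k * (1 + (R - r)) powr (1 - \<alpha>)) * M"
    using truncation_weight_le_inner[OF _ r k \<alpha>] truncation_weight_bounds(1)[OF x k \<alpha>] y k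
    by (intro mult_mono) auto
  moreover have "0 \<le> (truncation_weight k \<alpha> R x)\<^sup>2 / (2 * t)" using t by simp
  ultimately show ?thesis using True by simp
next
  case False
  have "y * truncation_weight k \<alpha> R x \<le> (t * y\<^sup>2 + (truncation_weight k \<alpha> R x)\<^sup>2 / t) / 2"
    by (rule mult_le_weighted_squares[OF t])
  then show ?thesis using False t by (simp add: field_simps)
qed

lemma integral_truncation_weight_mult_le:
  fixes \<phi> :: "real \<Rightarrow> real" and Dn :: "real set" and k \<alpha> R r t M :: real
  assumes Dn: "Dn \<in> sets lebesgue" "Dn \<subseteq> {-R<..<R}"
    and \<phi>_meas: "(\<lambda>x. indicator Dn x * \<phi> x) \<in> borel_measurable lebesgue"
    and \<phi>_bound: "\<And>x. x \<in> Dn \<Longrightarrow> 0 \<le> \<phi> x \<and> \<phi> x \<le> M"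
    and k: "0 \<le> k" and M: "0 \<le> M" and \<alpha>: "\<alpha> > 3/2" and R: "0 < R" and r: "0 \<le> r" "r \<le> R" and t: "t > 0"
  shows "(LINT x:Dn|lebesgue. truncation_weight k \<alpha> R x * \<phi> x)
     \<le> 4 * k * M * r * (1 + (R - r)) powr (1 - \<alpha>)
        + (t * ((LINT x:Dn|lebesgue. (\<phi> x)\<^sup>2) - (LINT x:Dn \<inter> {-r<..<r}|lebesgue. (\<phi> x)\<^sup>2)) + (4 * k\<^sup>2 / (2 * \<alpha> - 3)) / t) / 2"
proof -
  define I where "I = {-r<..<r}"
  define h where "h = truncation_weight k \<alpha> R"
  define P where "P = (1 + (R - r)) powr (1 - \<alpha>)"
  have \<alpha>1: "\<alpha> > 1" using \<alpha> by simp
  have P_nonneg: "0 \<le> P" by (simp add: P_def)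
  have Im[measurable]: "I \<in> sets lebesgue" by (simp add: I_def)
  have RRm: "{-R<..<R} \<in> sets lebesgue" by simp
  have Dnm[measurable]: "Dn \<in> sets lebesgue" by (rule Dn(1))
  have measure_I: "measure lebesgue I = 2 * r" using r
    by (simp add: I_def measure_completion measure_lborel_Ioo)
  have Ioo_r_int: "integrable lebesgue (indicator I :: real \<Rightarrow> real)"
    using r by (intro integrable_real_indicator) (auto simp: I_def emeasure_completion)
  have Ioo_R_int: "integrable lebesgue (indicator {-R<..<R} :: real \<Rightarrow> real)"
    using R by (intro integrable_real_indicator) (auto simp: emeasure_completion)
  have h_meas: "(\<lambda>x. indicator {-R<..<R} x * h x) \<in> borel_measurable lebesgue"
    unfolding h_def by (rule borel_measurable_lebesgue_indicator_continuous) (auto intro: continuous_on_truncation_weight)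
  have h_bounds: "\<And>x. x \<in> Dn \<Longrightarrow> 0 \<le> h x \<and> h x \<le> 2 * k"
    using truncation_weight_bounds[OF _ k \<alpha>1] Dn(2) by (auto simp: h_def subset_eq abs_less_iff)
  have \<phi>2_int: "integrable lebesgue (\<lambda>x. indicator Dn x * (\<phi> x)\<^sup>2)"
  proof (rule integrable_bounded_by_indicator[OF _ Ioo_R_int])
    have "(\<lambda>x. indicator Dn x * (\<phi> x)\<^sup>2) = (\<lambda>x. (indicator Dn x * \<phi> x)\<^sup>2)"
      by (auto simp: fun_eq_iff indicator_def)
    then show "(\<lambda>x. indicator Dn x * (\<phi> x)\<^sup>2) \<in> borel_measurable lebesgue" using \<phi>_meas by simp
    show "\<bar>indicator Dn x * (\<phi> x)\<^sup>2\<bar> \<le> M * M * indicator {-R<..<R} x" for x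
      using \<phi>_bound[of x] Dn(2) by (auto simp: indicator_def power2_eq_square intro: mult_mono)
  qed
  have \<phi>2_I_int: "integrable lebesgue (\<lambda>x. indicator (Dn \<inter> I) x * (\<phi> x)\<^sup>2)"
  proof -
    have "(\<lambda>x. indicator (Dn \<inter> I) x * (\<phi> x)\<^sup>2) = (\<lambda>x. indicator I x * (indicator Dn x * (\<phi> x)\<^sup>2))"
      by (auto simp: fun_eq_iff indicator_def)
    moreover have "integrable lebesgue (\<lambda>x. indicator I x * (indicator Dn x * (\<phi> x)\<^sup>2))"
    proof (rule Bochner_Integration.integrable_bound[OF \<phi>2_int])
      have "(\<lambda>x. indicator Dn x * (\<phi> x)\<^sup>2) \<in> borel_measurable lebesgue"
        by (rule borel_measurable_integrable[OF \<phi>2_int])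
      then show "(\<lambda>x. indicator I x * (indicator Dn x * (\<phi> x)\<^sup>2)) \<in> borel_measurable lebesgue"
        by measurable
    qed (auto simp: indicator_def)
    ultimately show ?thesis by simp
  qed
  have I_int: "integrable lebesgue (indicator (Dn \<inter> I) :: real \<Rightarrow> real)"
    by (rule Bochner_Integration.integrable_bound[OF Ioo_r_int]) (auto simp: indicator_def)
  have integral_I_le: "(\<integral>x. indicator (Dn \<inter> I) x \<partial>lebesgue) \<le> 2 * r"
  proof -
    have "(\<integral>x. indicator (Dn \<inter> I) x \<partial>lebesgue) \<le> (\<integral>x. indicator I x \<partial>lebesgue :: real)"
      by (rule Bochner_Integration.integral_mono[OF I_int Ioo_r_int]) (auto simp: indicator_def)
    also have "\<dots> = measure lebesgue I" using Ioo_r_int by (simp add: integrable_indicator_iff)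
    finally show ?thesis using measure_I by simp
  qed
  note h2 = truncation_weight_square[OF k \<alpha> Dn, folded h_def]
  have lhs_meas: "(\<lambda>x. indicator Dn x * (h x * \<phi> x)) \<in> borel_measurable lebesgue"
  proof -
    have "(\<lambda>x. indicator Dn x * (h x * \<phi> x)) = (\<lambda>x. (indicator {-R<..<R} x * h x) * (indicator Dn x * \<phi> x))"
      using Dn(2) by (auto simp: fun_eq_iff indicator_def subset_eq)
    then show ?thesis using h_meas \<phi>_meas by simp
  qed
  have lhs_int: "integrable lebesgue (\<lambda>x. indicator Dn x * (h x * \<phi> x))"
  proof (rule integrable_bounded_by_indicator[OF lhs_meas Ioo_R_int])
    show "\<bar>indicator Dn x * (h x * \<phi> x)\<bar> \<le> 2 * k * M * indicator {-R<..<R} x" for x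
      using \<phi>_bound[of x] h_bounds[of x] Dn(2) k M by (auto simp: indicator_def abs_mult intro: mult_mono)
  qed
  define rhs where "rhs x = (2 * k * P * M) * indicator (Dn \<inter> I) x
      + (t / 2) * (indicator Dn x * (\<phi> x)\<^sup>2 - indicator (Dn \<inter> I) x * (\<phi> x)\<^sup>2)
      + (1 / (2 * t)) * (indicator Dn x * (h x)\<^sup>2)" for x
  have rhs_int: "integrable lebesgue rhs"
    unfolding rhs_def[abs_def] using I_int \<phi>2_int \<phi>2_I_int h2(1) by simp
  have pw: "indicator Dn x * (h x * \<phi> x) \<le> rhs x" for x
  proof (cases "x \<in> Dn")
    case True
    then have "\<bar>x\<bar> < R" using Dn(2) by (auto simp: abs_less_iff)
    from truncation_weight_mult_le[OF this r(2) k \<alpha>1 t, of "\<phi> x" M] \<phi>_bound[OF True]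
    show ?thesis using True by (cases "x \<in> I") (auto simp: rhs_def h_def P_def I_def abs_less_iff algebra_simps)
  qed (simp add: rhs_def)
  have "(LINT x:Dn|lebesgue. truncation_weight k \<alpha> R x * \<phi> x) = (\<integral>x. indicator Dn x * (h x * \<phi> x) \<partial>lebesgue)"
    by (simp add: set_lebesgue_integral_def h_def)
  also have "\<dots> \<le> (\<integral>x. rhs x \<partial>lebesgue)" by (rule Bochner_Integration.integral_mono[OF lhs_int rhs_int pw])
  also have "\<dots> = (2 * k * P * M) * (\<integral>x. indicator (Dn \<inter> I) x \<partial>lebesgue)
      + (t / 2) * ((\<integral>x. indicator Dn x * (\<phi> x)\<^sup>2 \<partial>lebesgue) - (\<integral>x. indicator (Dn \<inter> I) x * (\<phi> x)\<^sup>2 \<partial>lebesgue))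
      + (1 / (2 * t)) * (\<integral>x. indicator Dn x * (h x)\<^sup>2 \<partial>lebesgue)"
    unfolding rhs_def[abs_def] using I_int \<phi>2_int \<phi>2_I_int h2(1) by simp
  also have "\<dots> \<le> (2 * k * P * M) * (2 * r)
      + (t / 2) * ((\<integral>x. indicator Dn x * (\<phi> x)\<^sup>2 \<partial>lebesgue) - (\<integral>x. indicator (Dn \<inter> I) x * (\<phi> x)\<^sup>2 \<partial>lebesgue))
      + (1 / (2 * t)) * (4 * k\<^sup>2 / (2 * \<alpha> - 3))"
    using integral_I_le h2(2) k P_nonneg M t
    by (intro add_mono order_refl mult_left_mono) auto
  also have "\<dots> = 4 * k * M * r * (1 + (R - r)) powr (1 - \<alpha>)
        + (t * ((LINT x:Dn|lebesgue. (\<phi> x)\<^sup>2) - (LINT x:Dn \<inter> {-r<..<r}|lebesgue. (\<phi> x)\<^sup>2)) + (4 * k\<^sup>2 / (2 * \<alpha> - 3)) / t) / 2"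
    using t by (simp add: set_lebesgue_integral_def P_def I_def field_simps)
  finally show ?thesis .
qed


lemma bounded_open_interval_eq_Ioo:
  fixes D :: "real set"
  assumes o: "open D" and i: "is_interval D" and b: "bounded D" and ne: "D \<noteq> {}"
  shows "Inf D < Sup D" "D = {Inf D<..<Sup D}"
proof -
  have ba: "bdd_above D" and bb: "bdd_below D"
    using b by (auto intro: bounded_imp_bdd_above bounded_imp_bdd_below)
  have inner: "Inf D < x \<and> x < Sup D" if x: "x \<in> D" for x
  proof -
    obtain e where e: "e > 0" "ball x e \<subseteq> D" using o x by (auto simp: open_contains_ball)
    have "x - e/2 \<in> D" "x + e/2 \<in> D" using e by (auto simp: dist_real_def subset_eq)
    then have "Inf D \<le> x - e/2" "x + e/2 \<le> Sup D"
      using ba bb by (auto intro: cInf_lower cSup_upper)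
    then show ?thesis using e by auto
  qed
  obtain x where x: "x \<in> D" using ne by auto
  show "Inf D < Sup D" using inner[OF x] by auto
  show "D = {Inf D<..<Sup D}"
  proof
    show "D \<subseteq> {Inf D<..<Sup D}" using inner by auto
    show "{Inf D<..<Sup D} \<subseteq> D"
    proof
      fix z assume z: "z \<in> {Inf D<..<Sup D}"
      obtain p where p: "p \<in> D" "p < z" using z cInf_less_iff[OF ne bb] by auto
      obtain q where q: "q \<in> D" "z < q" using z less_cSup_iff[OF ne ba] by auto
      show "z \<in> D" using i p q unfolding is_interval_1 by (meson less_imp_le)
    qed
  qed
qed

lemma lambda_v_empty: "lambda_v K {} a = \<infinity>"
proof -
  have "{ereal (- (LINT x:{}|lebesgue. (nlop K {} \<phi> x + a x * \<phi> x) * \<phi> x)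
                                 / (LINT x:{}|lebesgue. (\<phi> x)\<^sup>2)) | \<phi>.
      set_borel_measurable lebesgue {} \<phi> \<and> set_integrable lebesgue {} (\<lambda>x. (\<phi> x)\<^sup>2) \<and>
      (LINT x:{}|lebesgue. (\<phi> x)\<^sup>2) \<noteq> 0} = {}"
    by (simp add: set_lebesgue_integral_def)
  then show ?thesis unfolding lambda_v_def by (simp only: Inf_empty top_ereal_def)
qed

lemma set_integral_square_pos:
  fixes \<phi> :: "real \<Rightarrow> real"
  assumes S: "open S" and \<phi>_cont: "continuous_on S \<phi>" and x0: "x0 \<in> S" "\<phi> x0 \<noteq> 0"
    and integrable: "set_integrable lebesgue S (\<lambda>x. (\<phi> x)\<^sup>2)"
  shows "0 < (LINT x:S|lebesgue. (\<phi> x)\<^sup>2)"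
proof -
  define \<eta> where "\<eta> = \<bar>\<phi> x0\<bar> / 2"
  have "open {y::real. \<eta> < \<bar>y\<bar>}"
    by (rule open_Collect_less[OF continuous_on_const continuous_on_rabs[OF continuous_on_id]])
  then have "open (S \<inter> \<phi> -` {y. \<eta> < \<bar>y\<bar>})"
    by (rule continuous_open_preimage[OF \<phi>_cont S])
  moreover have "x0 \<in> S \<inter> \<phi> -` {y. \<eta> < \<bar>y\<bar>}" using x0 by (simp add: \<eta>_def)
  ultimately obtain \<delta> where \<delta>: "\<delta> > 0" "ball x0 \<delta> \<subseteq> S \<inter> \<phi> -` {y. \<eta> < \<bar>y\<bar>}"
    by (meson open_contains_ball)
  define B where "B = {x0 - \<delta><..<x0 + \<delta>}"
  have B_subset: "B \<subseteq> S \<inter> \<phi> -` {y. \<eta> < \<bar>y\<bar>}"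
  proof
    fix x assume "x \<in> B"
    then have "x \<in> ball x0 \<delta>" by (simp add: B_def dist_real_def abs_less_iff)
    then show "x \<in> S \<inter> \<phi> -` {y. \<eta> < \<bar>y\<bar>}" using \<delta>(2) by blast
  qed
  have "0 < \<eta>\<^sup>2 * (2 * \<delta>)" using x0 \<delta> by (simp add: \<eta>_def)
  also have "\<dots> = (\<integral>x. \<eta>\<^sup>2 * indicator B x \<partial>lebesgue)"
    using \<delta> by (simp add: B_def measure_completion measure_lborel_Ioo)
  also have "\<dots> \<le> (LINT x:S|lebesgue. (\<phi> x)\<^sup>2)"
    unfolding set_lebesgue_integral_def
  proof (rule integral_mono)
    show "integrable lebesgue (\<lambda>x. \<eta>\<^sup>2 * indicator B x)"
      using \<delta> by (intro integrable_mult_right integrable_real_indicator) (auto simp: B_def emeasure_completion)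
    show "integrable lebesgue (\<lambda>x. indicator S x *\<^sub>R (\<phi> x)\<^sup>2)"
      using integrable by (simp add: set_integrable_def)
    fix x
    show "\<eta>\<^sup>2 * indicator B x \<le> indicator S x *\<^sub>R (\<phi> x)\<^sup>2"
    proof (cases "x \<in> B")
      case True
      then have "x \<in> S" "\<bar>\<eta>\<bar> \<le> \<bar>\<phi> x\<bar>" using B_subset by (auto simp: \<eta>_def)
      then show ?thesis using True by (simp add: abs_le_square_iff)
    qed simp
  qed
  finally show ?thesis .
qed

locale decaying_kernel =
  fixes K :: "real \<Rightarrow> real \<Rightarrow> real" and \<Omega> :: "real set" and C \<alpha> :: real and N :: "real set"
  assumes open_domain: "open \<Omega>" and interval_domain: "is_interval \<Omega>"
    and null_N: "N \<in> null_sets lebesgue"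
    and continuous: "\<And>y. y \<in> \<Omega> \<Longrightarrow> y \<notin> N \<Longrightarrow> continuous_on \<Omega> (\<lambda>x. K x y)"
    and measurable: "\<And>x. x \<in> \<Omega> \<Longrightarrow> set_borel_measurable lebesgue \<Omega> (K x)"
    and symmetric: "\<And>x y. x \<in> \<Omega> \<Longrightarrow> y \<in> \<Omega> \<Longrightarrow> K x y = K y x"
    and C_pos: "C > 0" and \<alpha>_gt: "\<alpha> > 3/2"
    and decay: "\<And>x y. x \<in> \<Omega> \<Longrightarrow> y \<in> \<Omega> \<Longrightarrow> 0 \<le> K x y \<and> K x y \<le> C * (1 + \<bar>x - y\<bar>) powr (-\<alpha>)"
begin

definition trunc :: "nat \<Rightarrow> real set" where "trunc n = \<Omega> \<inter> {- real n<..<real n}"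

lemma trunc_subset: "trunc n \<subseteq> \<Omega>" and trunc_subset_Ioo: "trunc n \<subseteq> {- real n<..<real n}"
  by (auto simp: trunc_def)

lemma open_trunc: "open (trunc n)"
  using open_domain by (auto simp: trunc_def)

lemma trunc_mono: "r \<le> n \<Longrightarrow> trunc r \<subseteq> trunc n"
  by (auto simp: trunc_def)

lemma trunc_Int_Ioo: "r \<le> n \<Longrightarrow> trunc n \<inter> {- real r<..<real r} = trunc r"
  by (auto simp: trunc_def)

lemma alpha_gt_one: "\<alpha> > 1"
  using \<alpha>_gt by simp

lemma kernel_mult_le_decay:
  fixes \<phi> :: "real \<Rightarrow> real"
  assumes \<phi>_nonneg: "\<And>y. y \<in> \<Omega> \<Longrightarrow> 0 \<le> \<phi> y" and \<phi>_le: "\<And>y. y \<in> \<Omega> \<Longrightarrow> \<phi> y \<le> M"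
    and x: "x \<in> \<Omega>"
  shows "0 \<le> M * C"
    and "\<bar>indicator \<Omega> y * (K x y * \<phi> y)\<bar> \<le> M * C * (1 + \<bar>x - y\<bar>) powr (-\<alpha>)"
proof -
  show "0 \<le> M * C" using decay[OF x x] \<phi>_nonneg[OF x] \<phi>_le[OF x] by simp
  have "K x y * \<phi> y \<le> (C * (1 + \<bar>x - y\<bar>) powr (-\<alpha>)) * M" if "y \<in> \<Omega>"
    using decay[OF x that] \<phi>_nonneg[OF that] \<phi>_le[OF that] \<phi>_nonneg[OF x] \<phi>_le[OF x]
    by (intro mult_mono) auto
  then show "\<bar>indicator \<Omega> y * (K x y * \<phi> y)\<bar> \<le> M * C * (1 + \<bar>x - y\<bar>) powr (-\<alpha>)"
    using decay[OF x, of y] \<phi>_nonneg[of y] mult_nonneg_nonneg[OF \<open>0 \<le> M * C\<close> powr_ge_zero]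
    by (auto simp: indicator_def algebra_simps)
qed

lemma set_integrable_decaying_kernel:
  fixes \<phi> :: "real \<Rightarrow> real"
  assumes \<phi>_meas: "set_borel_measurable lebesgue \<Omega> \<phi>"
    and \<phi>_nonneg: "\<And>y. y \<in> \<Omega> \<Longrightarrow> 0 \<le> \<phi> y" and \<phi>_le: "\<And>y. y \<in> \<Omega> \<Longrightarrow> \<phi> y \<le> M"
    and x: "x \<in> \<Omega>"
  shows "set_integrable lebesgue \<Omega> (\<lambda>y. K x y * \<phi> y)"
  unfolding set_integrable_def
proof (rule Bochner_Integration.integrable_bound)
  let ?T = "\<lambda>y. indicator {x..} y * (1 + (y - x)) powr (-\<alpha>) + indicator {..x} y * (1 + (x - y)) powr (-\<alpha>)"
  have bound: "0 \<le> M * C" "\<And>y. \<bar>indicator \<Omega> y * (K x y * \<phi> y)\<bar> \<le> M * C * (1 + \<bar>x - y\<bar>) powr (-\<alpha>)"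
    using kernel_mult_le_decay[OF \<phi>_nonneg \<phi>_le x] by simp_all
  show "integrable lebesgue (\<lambda>y. M * C * ?T y)"
    using integral_two_tails(1)[OF alpha_gt_one order_refl order_refl] by simp
  have "(\<lambda>y. indicator \<Omega> y *\<^sub>R (K x y * \<phi> y)) = (\<lambda>y. (indicator \<Omega> y * K x y) * (indicator \<Omega> y * \<phi> y))"
    by (auto simp: fun_eq_iff indicator_def)
  then show "(\<lambda>y. indicator \<Omega> y *\<^sub>R (K x y * \<phi> y)) \<in> borel_measurable lebesgue"
    using measurable[OF x] \<phi>_meas by (simp add: set_borel_measurable_def)
  have "\<bar>indicator \<Omega> y * (K x y * \<phi> y)\<bar> \<le> M * C * ?T y" for y
    using bound(2)[where y = y] mult_left_mono[OF decay_le_two_tails[where p = x and q = x and x = x and y = y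
        and \<alpha> = \<alpha>] bound(1)] by linarith
  then show "AE y in lebesgue. norm (indicator \<Omega> y *\<^sub>R (K x y * \<phi> y)) \<le> norm (M * C * ?T y)"
    by (intro AE_I2) (auto intro: order_trans[OF _ abs_ge_self])
qed

lemma nlop_truncation_error:
  fixes \<phi> :: "real \<Rightarrow> real"
  assumes \<phi>_meas: "set_borel_measurable lebesgue \<Omega> \<phi>"
    and \<phi>_nonneg: "\<And>y. y \<in> \<Omega> \<Longrightarrow> 0 \<le> \<phi> y" and \<phi>_le: "\<And>y. y \<in> \<Omega> \<Longrightarrow> \<phi> y \<le> M"
    and x: "x \<in> \<Omega>" "\<bar>x\<bar> < R"
  shows "nlop K \<Omega> \<phi> x - nlop K (\<Omega> \<inter> {-R<..<R}) \<phi> x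
       \<le> M * C / (\<alpha> - 1) * ((1 + (R - x)) powr (1 - \<alpha>) + (1 + (x + R)) powr (1 - \<alpha>))"
proof -
  define v where "v y = indicator \<Omega> y * (K x y * \<phi> y)" for y
  let ?T = "\<lambda>y. indicator {R..} y * (1 + (y - x)) powr (-\<alpha>) + indicator {..-R} y * (1 + (x - y)) powr (-\<alpha>)"
  have "-R \<le> x" "x \<le> R" using x by auto
  note T = integral_two_tails[OF alpha_gt_one this]
  have v_int: "integrable lebesgue v"
    using set_integrable_decaying_kernel[OF \<phi>_meas \<phi>_nonneg \<phi>_le x(1)]
    by (simp add: set_integrable_def v_def[abs_def])
  have [measurable]: "v \<in> borel_measurable lebesgue" using v_int by auto
  have vR_int: "integrable lebesgue (\<lambda>y. indicator {-R<..<R} y * v y)"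
    by (rule Bochner_Integration.integrable_bound[OF v_int]) (auto simp: indicator_def)
  have "nlop K (\<Omega> \<inter> {-R<..<R}) \<phi> x = (\<integral>y. indicator {-R<..<R} y * v y \<partial>lebesgue)"
    unfolding nlop_def set_lebesgue_integral_def v_def
    by (intro Bochner_Integration.integral_cong) (auto simp: indicator_def)
  moreover have "nlop K \<Omega> \<phi> x = (\<integral>y. v y \<partial>lebesgue)"
    by (simp add: nlop_def set_lebesgue_integral_def v_def)
  ultimately have "nlop K \<Omega> \<phi> x - nlop K (\<Omega> \<inter> {-R<..<R}) \<phi> x
      = (\<integral>y. v y - indicator {-R<..<R} y * v y \<partial>lebesgue)"
    using v_int vR_int by simp
  also have "\<dots> \<le> (\<integral>y. M * C * ?T y \<partial>lebesgue)"
  proof (rule integral_mono)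
    have bound: "0 \<le> M * C" "\<And>y. \<bar>indicator \<Omega> y * (K x y * \<phi> y)\<bar> \<le> M * C * (1 + \<bar>x - y\<bar>) powr (-\<alpha>)"
      using kernel_mult_le_decay[OF \<phi>_nonneg \<phi>_le x(1)] by simp_all
    show "v y - indicator {-R<..<R} y * v y \<le> M * C * ?T y" for y
    proof (cases "y \<in> {-R<..<R}")
      case False
      then have "M * C * (1 + \<bar>x - y\<bar>) powr (-\<alpha>) \<le> M * C * ?T y"
        using x by (intro mult_left_mono[OF _ bound(1)] decay_le_two_tails) auto
      then show ?thesis using False bound(2)[where y = y] by (simp add: v_def)
    qed (use bound(1) in auto)
  qed (use v_int vR_int T(1) in auto)
  also have "\<dots> = M * C / (\<alpha> - 1) * ((1 + (R - x)) powr (1 - \<alpha>) + (1 + (x + R)) powr (1 - \<alpha>))"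
    using T by simp
  finally show ?thesis .
qed

lemma interval_kernel_trunc:
  assumes "trunc n \<noteq> {}"
  obtains c d where "trunc n = {c<..<d}" "interval_kernel K \<Omega> c d C N"
proof -
  have "is_interval (trunc n)" unfolding trunc_def
    by (rule is_interval_Int[OF interval_domain]) (auto simp: is_interval_1)
  moreover have "bounded (trunc n)" unfolding trunc_def by (intro bounded_Int) auto
  ultimately have "Inf (trunc n) < Sup (trunc n)" and eq: "trunc n = {Inf (trunc n)<..<Sup (trunc n)}"
    using bounded_open_interval_eq_Ioo[OF open_trunc _ _ assms] by auto
  moreover have "0 \<le> K x y \<and> K x y \<le> C" if "x \<in> \<Omega>" "y \<in> \<Omega>" for x y
  proof -
    have "(1 + \<bar>x - y\<bar>) powr (-\<alpha>) \<le> 1" by (rule powr_nonpos_le_one) (use \<alpha>_gt in auto)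
    then have "C * (1 + \<bar>x - y\<bar>) powr (-\<alpha>) \<le> C" using C_pos by (simp add: mult_left_le)
    then show ?thesis using decay[OF that] by linarith
  qed
  ultimately have "interval_kernel K \<Omega> (Inf (trunc n)) (Sup (trunc n)) C N"
    using trunc_subset[of n] open_domain null_N continuous measurable symmetric
    by unfold_locales simp_all
  with eq show ?thesis by (rule that)
qed

lemma lambda_p_le_lambda_v_trunc:
  assumes "continuous_on (closure \<Omega>) a" "\<And>x. x \<in> \<Omega> \<Longrightarrow> \<bar>a x\<bar> \<le> A"
  shows "lambda_p K \<Omega> a \<le> lambda_v K (trunc n) a"
proof (cases "trunc n = {}")
  case False
  then obtain c d where eq: "trunc n = {c<..<d}" and kernel: "interval_kernel K \<Omega> c d C N"
    by (rule interval_kernel_trunc)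
  interpret interval_kernel K \<Omega> c d C N by (rule kernel)
  show ?thesis using lambda_p_le_lambda_v[OF assms] eq by (simp add: D_def)
qed (simp add: lambda_v_empty)

end

context decaying_kernel
begin

lemma lambda_v_trunc_le:
  fixes \<phi> a :: "real \<Rightarrow> real" and l A M :: real
  assumes a_cont: "continuous_on (closure \<Omega>) a" and a_bound: "\<And>x. x \<in> \<Omega> \<Longrightarrow> \<bar>a x\<bar> \<le> A"
    and \<phi>_cont: "continuous_on \<Omega> \<phi>" and \<phi>_nonneg: "\<And>x. x \<in> \<Omega> \<Longrightarrow> 0 \<le> \<phi> x"
    and \<phi>_le: "\<And>x. x \<in> \<Omega> \<Longrightarrow> \<phi> x \<le> M"
    and subsolution: "\<And>x. x \<in> \<Omega> \<Longrightarrow> 0 \<le> nlop K \<Omega> \<phi> x + (a x + l) * \<phi> x"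
    and mass_pos: "0 < (LINT x:trunc n|lebesgue. (\<phi> x)\<^sup>2)"
  shows "lambda_v K (trunc n) a
    \<le> ereal (l + (LINT x:trunc n|lebesgue. truncation_weight (M * C / (\<alpha> - 1)) \<alpha> (real n) x * \<phi> x)
                 / (LINT x:trunc n|lebesgue. (\<phi> x)\<^sup>2))"
proof -
  define k where "k = M * C / (\<alpha> - 1)"
  define h where "h = truncation_weight k \<alpha> (real n)"
  have "trunc n \<noteq> {}" using mass_pos by (auto simp: set_lebesgue_integral_def)
  then obtain c d where eq: "trunc n = {c<..<d}" and kernel: "interval_kernel K \<Omega> c d C N"
    by (rule interval_kernel_trunc)
  interpret interval_kernel K \<Omega> c d C N by (rule kernel)
  have D_eq: "D = trunc n" using eq by (simp add: D_def)
  have D_props: "x \<in> \<Omega>" "\<bar>x\<bar> < real n" if "x \<in> D" for x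
    using that by (auto simp: D_eq trunc_def)
  have "(c + d) / 2 \<in> D" using cd by (simp add: D_def)
  then have "0 \<le> M" using \<phi>_nonneg \<phi>_le D_props order_trans by blast
  then have k_nonneg: "0 \<le> k" using C_pos \<alpha>_gt by (simp add: k_def)
  have \<phi>_meas: "set_borel_measurable lebesgue \<Omega> \<phi>"
    using borel_measurable_lebesgue_indicator_continuous[OF _ \<phi>_cont] open_domain
    by (simp add: set_borel_measurable_def)
  have truncation: "nlop K \<Omega> \<phi> x - nlop K D \<phi> x \<le> h x" if "x \<in> D" for x
    using nlop_truncation_error[OF \<phi>_meas \<phi>_nonneg \<phi>_le D_props[OF that]]
    by (simp add: D_eq trunc_def h_def truncation_weight_def k_def)
  have h_cont: "continuous_on D h"
    unfolding h_def
    by (rule continuous_on_subset[OF continuous_on_truncation_weight]) (use D_props in \<open>force simp: abs_less_iff\<close>)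
  have h_bound: "\<bar>h x\<bar> \<le> 2 * k" if "x \<in> D" for x
    using truncation_weight_bounds[OF D_props(2)[OF that] k_nonneg] \<alpha>_gt by (simp add: h_def)
  have a_cont_D: "continuous_on D a"
    by (rule continuous_on_subset[OF a_cont]) (use D_props closure_subset in auto)
  have mass_pos_D: "(LINT x:D|lebesgue. (\<phi> x)\<^sup>2) > 0" using mass_pos by (simp add: D_eq)
  have subsolution_D: "\<And>x. x \<in> D \<Longrightarrow> 0 \<le> nlop K \<Omega> \<phi> x + (a x + l) * \<phi> x"
    and a_bound_D: "\<And>x. x \<in> D \<Longrightarrow> \<bar>a x\<bar> \<le> A"
    using subsolution a_bound D_props by blast+
  note bound = rayleigh_quotient_le[OF \<phi>_cont \<phi>_nonneg \<phi>_le subsolution_D a_cont_D a_bound_D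
      h_cont h_bound truncation mass_pos_D]
  have "lambda_v K D a
      \<le> ereal (- (LINT x:D|lebesgue. (nlop K D \<phi> x + a x * \<phi> x) * \<phi> x) / (LINT x:D|lebesgue. (\<phi> x)\<^sup>2))"
    unfolding lambda_v_def
    by (rule Inf_lower, intro CollectI exI[of _ \<phi>] conjI refl bound(1,2)) (use mass_pos_D in simp_all)
  also have "\<dots> \<le> ereal (l + (LINT x:D|lebesgue. h x * \<phi> x) / (LINT x:D|lebesgue. (\<phi> x)\<^sup>2))"
    using bound(3) by simp
  finally show ?thesis by (simp add: D_eq h_def k_def)
qed

lemma liminf_lambda_v_le:
  fixes \<phi> a :: "real \<Rightarrow> real" and l A :: real
  assumes a_cont: "continuous_on (closure \<Omega>) a" and a_bound: "\<And>x. x \<in> \<Omega> \<Longrightarrow> \<bar>a x\<bar> \<le> A"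
    and \<phi>_cont: "continuous_on \<Omega> \<phi>" and \<phi>_bounded: "bounded (\<phi> ` \<Omega>)"
    and \<phi>_nonneg: "\<And>x. x \<in> \<Omega> \<Longrightarrow> 0 \<le> \<phi> x" and x0: "x0 \<in> \<Omega>" "\<phi> x0 \<noteq> 0"
    and subsolution: "\<And>x. x \<in> \<Omega> \<Longrightarrow> 0 \<le> nlop K \<Omega> \<phi> x + (a x + l) * \<phi> x"
  shows "liminf (\<lambda>n. lambda_v K (trunc n) a) \<le> ereal l"
proof -
  obtain M where \<phi>_abs_le: "\<And>x. x \<in> \<Omega> \<Longrightarrow> \<bar>\<phi> x\<bar> \<le> M"
    using \<phi>_bounded by (auto simp: bounded_iff)
  then have \<phi>_le: "\<And>x. x \<in> \<Omega> \<Longrightarrow> \<phi> x \<le> M" by (meson abs_ge_self order_trans)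
  have M: "0 \<le> M" using \<phi>_abs_le[OF x0(1)] by linarith
  define k where "k = M * C / (\<alpha> - 1)"
  have k: "0 \<le> k" using M C_pos \<alpha>_gt by (simp add: k_def)
  define S where "S n = (LINT x:trunc n|lebesgue. (\<phi> x)\<^sup>2)" for n
  define E where "E n = (LINT x:trunc n|lebesgue. truncation_weight k \<alpha> (real n) x * \<phi> x)" for n
  have \<phi>_meas: "(\<lambda>x. indicator (trunc n) x * \<phi> x) \<in> borel_measurable lebesgue" for n
    using continuous_on_subset[OF \<phi>_cont trunc_subset] open_trunc
    by (intro borel_measurable_lebesgue_indicator_continuous) auto
  have S_integrable: "integrable lebesgue (\<lambda>x. indicator (trunc n) x * (\<phi> x)\<^sup>2)" for n
  proof (rule Bochner_Integration.integrable_bound)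
    show "integrable lebesgue (\<lambda>x. (M * M) * indicator {- real n<..<real n} x)"
      by (intro integrable_mult_right integrable_real_indicator) (auto simp: emeasure_completion)
    have "(\<lambda>x. indicator (trunc n) x * (\<phi> x)\<^sup>2) = (\<lambda>x. (indicator (trunc n) x * \<phi> x)\<^sup>2)"
      by (auto simp: fun_eq_iff indicator_def)
    then show "(\<lambda>x. indicator (trunc n) x * (\<phi> x)\<^sup>2) \<in> borel_measurable lebesgue"
      using \<phi>_meas[of n] by simp
    have "\<bar>indicator (trunc n) x * (\<phi> x)\<^sup>2\<bar> \<le> M * M * indicator {- real n<..<real n} x" for x
      using \<phi>_nonneg \<phi>_le trunc_subset trunc_subset_Ioo M
      by (auto simp: indicator_def power2_eq_square subset_eq intro!: mult_mono)
    then show "AE x in lebesgue. norm (indicator (trunc n) x * (\<phi> x)\<^sup>2) \<le> norm (M * M * indicator {- real n<..<real n} x)"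
      by (auto intro!: AE_I2 intro: order_trans[OF _ abs_ge_self])
  qed
  have S_mono: "S r \<le> S n" if "r \<le> n" for r n
    unfolding S_def set_lebesgue_integral_def
    using S_integrable trunc_mono[OF that] by (intro integral_mono) (auto simp: indicator_def)
  have S_nonneg: "0 \<le> S n" for n
    unfolding S_def set_lebesgue_integral_def by (intro integral_nonneg_AE) auto
  define n1 where "n1 = nat \<lceil>\<bar>x0\<bar>\<rceil> + 1"
  have "\<bar>x0\<bar> < real n1" unfolding n1_def by linarith
  then have "x0 \<in> trunc n1" using x0(1) by (auto simp: trunc_def abs_less_iff)
  then have S_n1: "0 < S n1"
    unfolding S_def
    by (intro set_integral_square_pos[OF open_trunc continuous_on_subset[OF \<phi>_cont trunc_subset] _ x0(2)])
       (use S_integrable in \<open>auto simp: set_integrable_def\<close>)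
  have E_bound: "E n \<le> (4 * k * M) * real r * (1 + (real n - real r)) powr (1 - \<alpha>)
      + (t * (S n - S r) + 4 * k\<^sup>2 / (2 * \<alpha> - 3) / t) / 2"
    if "r \<le> n" "n1 \<le> n" "t > 0" for r n t
    using integral_truncation_weight_mult_le[OF _ trunc_subset_Ioo[of n] \<phi>_meas, where k = k and M = M and \<alpha> = \<alpha>
        and r = "real r" and t = t]
      open_trunc \<phi>_nonneg \<phi>_le trunc_subset k M \<alpha>_gt that trunc_Int_Ioo[OF that(1)]
    by (auto simp: S_def E_def n1_def subset_eq)
  show ?thesis
  proof (rule ereal_le_epsilon2)
    fix \<epsilon> :: real assume "0 < \<epsilon>"
    have "eventually (\<lambda>n. E n \<le> \<epsilon> * S n) sequentially"
      by (rule eventually_error_le_mass[OF S_mono S_nonneg S_n1 _ _ _ E_bound \<open>0 < \<epsilon>\<close>])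
         (use k M \<alpha>_gt in auto)
    then have "eventually (\<lambda>n. lambda_v K (trunc n) a \<le> ereal l + ereal \<epsilon>) sequentially"
      using eventually_ge_at_top[of n1]
    proof eventually_elim
      case (elim n)
      have "0 < S n" using S_mono[OF elim(2)] S_n1 by simp
      then have "lambda_v K (trunc n) a \<le> ereal (l + E n / S n)"
        using lambda_v_trunc_le[OF a_cont a_bound \<phi>_cont \<phi>_nonneg \<phi>_le subsolution]
        by (simp add: S_def E_def k_def)
      also have "E n / S n \<le> \<epsilon>" using elim(1) \<open>0 < S n\<close> by (simp add: divide_le_eq)
      finally show ?case by simp
    qed
    then show "liminf (\<lambda>n. lambda_v K (trunc n) a) \<le> ereal l + ereal \<epsilon>"
      by (intro Liminf_le) auto
  qed
qed

end
context decaying_kernel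
begin

lemma liminf_lambda_v_le_lambda_p':
  assumes "continuous_on (closure \<Omega>) a" "\<And>x. x \<in> \<Omega> \<Longrightarrow> \<bar>a x\<bar> \<le> A"
  shows "liminf (\<lambda>n. lambda_v K (trunc n) a) \<le> lambda_p' K \<Omega> a"
  unfolding lambda_p'_def
proof (rule Inf_greatest, safe)
  fix l :: real and \<phi> :: "real \<Rightarrow> real" and x0
  assume "continuous_on \<Omega> \<phi>" "bounded (\<phi> ` \<Omega>)" "\<forall>x\<in>\<Omega>. 0 \<le> \<phi> x" "x0 \<in> \<Omega>" "\<phi> x0 \<noteq> 0"
    "\<forall>x\<in>\<Omega>. 0 \<le> nlop K \<Omega> \<phi> x + (a x + l) * \<phi> x"
  then show "liminf (\<lambda>n. lambda_v K (trunc n) a) \<le> ereal l"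
    using liminf_lambda_v_le[OF assms] by blast
qed

lemma lambda_p_le_liminf_lambda_v:
  assumes "continuous_on (closure \<Omega>) a" "\<And>x. x \<in> \<Omega> \<Longrightarrow> \<bar>a x\<bar> \<le> A"
  shows "lambda_p K \<Omega> a \<le> liminf (\<lambda>n. lambda_v K (trunc n) a)"
  using lambda_p_le_lambda_v_trunc[OF assms] by (intro Liminf_bounded) auto

end

lemma AE_continuous_obtain_null_set:
  fixes K :: "real \<Rightarrow> real \<Rightarrow> real"
  assumes "AE y in lebesgue. y \<in> \<Omega> \<longrightarrow> uniformly_continuous_on \<Omega> (\<lambda>x. K x y)"
  obtains N where "N \<in> null_sets lebesgue" "\<And>y. y \<in> \<Omega> \<Longrightarrow> y \<notin> N \<Longrightarrow> continuous_on \<Omega> (\<lambda>x. K x y)"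
proof -
  from assms obtain N where N: "{y \<in> space lebesgue. \<not> (y \<in> \<Omega> \<longrightarrow> uniformly_continuous_on \<Omega> (\<lambda>x. K x y))} \<subseteq> N"
      "emeasure lebesgue N = 0" "N \<in> sets lebesgue"
    by (rule AE_E)
  show ?thesis
    by (rule that[of N]) (use N in \<open>auto intro: uniformly_continuous_imp_continuous\<close>)
qed

theorem lemma3p5:
  fixes \<Omega> :: "real set" and a :: "real \<Rightarrow> real" and K :: "real \<Rightarrow> real \<Rightarrow> real"
    and C \<alpha> :: real
  assumes dom: "open \<Omega>" "is_interval \<Omega>" "\<Omega> \<noteq> {}" "\<not> bounded \<Omega>"
    and a_cont: "continuous_on (closure \<Omega>) a" and a_bdd: "bounded (a ` \<Omega>)"
    and K_meas: "\<And>x. x \<in> \<Omega> \<Longrightarrow> set_borel_measurable lebesgue \<Omega> (K x)"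
    and K_uc: "AE y in lebesgue. y \<in> \<Omega> \<longrightarrow> uniformly_continuous_on \<Omega> (\<lambda>x. K x y)"
    and K_sym: "\<And>x y. x \<in> \<Omega> \<Longrightarrow> y \<in> \<Omega> \<Longrightarrow> K x y = K y x"
    and C_pos: "C > 0" and \<alpha>_gt: "\<alpha> > 3/2"
    and K_bd: "\<And>x y. x \<in> \<Omega> \<Longrightarrow> y \<in> \<Omega> \<Longrightarrow> 0 \<le> K x y \<and> K x y \<le> C * (1 + \<bar>x - y\<bar>) powr (-\<alpha>)"
  shows "lambda_p K \<Omega> a \<le> liminf (\<lambda>n::nat. lambda_v K (\<Omega> \<inter> {- real n<..<real n}) a)
       \<and> liminf (\<lambda>n::nat. lambda_v K (\<Omega> \<inter> {- real n<..<real n}) a) \<le> lambda_p' K \<Omega> a"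
proof -
  obtain N where "N \<in> null_sets lebesgue" "\<And>y. y \<in> \<Omega> \<Longrightarrow> y \<notin> N \<Longrightarrow> continuous_on \<Omega> (\<lambda>x. K x y)"
    using AE_continuous_obtain_null_set[OF K_uc] by blast
  then interpret decaying_kernel K \<Omega> C \<alpha> N
    using dom K_meas K_sym C_pos \<alpha>_gt K_bd by unfold_locales auto
  obtain A where a_bound: "\<And>x. x \<in> \<Omega> \<Longrightarrow> \<bar>a x\<bar> \<le> A"
    using a_bdd by (auto simp: bounded_iff)
  show ?thesis
    using lambda_p_le_liminf_lambda_v[OF a_cont a_bound] liminf_lambda_v_le_lambda_p'[OF a_cont a_bound]
    by (simp add: trunc_def)
qed
end
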